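(* (i) For any choice of fundamental sequences $\{\lambda\}$ and every ordinal $\alpha<\omega^2$, $\mathrm{rk}(T_{\tau_\alpha},p(x))=\alpha$. (ii) With the fundamental sequences defined via Cantor normal form below, $\mathrm{rk}(T_{\tau_\alpha},p(x))=\alpha$ for every ordinal $\alpha<\varepsilon_0$.
   Context: For a theory $S$ and set of formulas $p$: $(S)^p=\{\neg\exists\bar x\varphi(\bar x): S\models\forall\bar x(\varphi\to\psi)\text{ for all }\psi\in p\}$, $[S]^p$ is the first-order closure of $S+(S)^p$; $[T]^p_0$ is the closure of $T$, $[T]^p_{\alpha+1}=[[T]^p_\alpha]^p$, unions at limits, $[T]^p_\infty=\bigcup_\alpha[T]^p_\alpha$; $\mathrm{rk}(T,p)$ is the least $\alpha$ with $[T]^p_\alpha=[T]^p_\infty$. Trees: $\varepsilon$ is the empty sequence, $s^\frown t$ concatenation, $i$ also denotes $\langle i\rangle$. For each countable limit $\lambda$ fix a strictly increasing $\{\lambda\}:\omega\to\lambda$ cofinal in $\lambda$. Define $\tau_0=\{\varepsilon\}$, $\tau_{\alpha+1}=\{\varepsilon\}\cup\{i^\frown s:i\in\omega,s\in\tau_\alpha\}$, $\tau_\lambda=\{\varepsilon\}\cup\{i^\frown s:i\in\omega,s\in\tau_{\{\lambda\}(i)}\}$. For a well-founded tree $\tau$, $\mathrm{rk}_\tau(s)=\sup_i(\mathrm{rk}_\tau(s^\frown i)+1)$ if $s\in\tau$ and $-1$ otherwise. The language $\mathcal L_\tau$ has unary predicates $P_s$ ($s\in\tau$, $s\neq\varepsilon$)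 and $U_i$ ($i\in\omega$). $T_\tau$ consists of: $\neg\exists xP_{s^\frown i}(x)\to\forall x(P_s(x)\to U_i(x))$ for $s^\frown i\in\tau$, $s\ne\varepsilon$; $\forall x(P_s(x)\to U_i(x))$ for all $i$ and all $s$ with $\mathrm{rk}_\tau(s)=0$; and $\exists^{\ge i}x\bigwedge_{j\le i}U_j(x)$ for all $i$. $p(x)=\{U_i(x):i\in\omega\}$. Fundamental sequences for (ii): write $\lambda<\varepsilon_0$ (the least $\varepsilon$ with $\omega^\varepsilon=\varepsilon$) in Cantor normal form $\lambda=\omega^{\lambda_1}n_1+\dots+\omega^{\lambda_k}n_k$ with $n_j\ge1$, $\lambda>\lambda_1>\dots>\lambda_k\ge0$ ($\lambda$ limit iff $\lambda_k>0$). Set $\{\lambda\}(i)=\omega^{\lambda_1}n_1+\dots+\omega^{\lambda_k}(n_k-1)+\omega^{\{\lambda_k\}(i)}$ if $\lambda_k$ is a limit, and $\{\lambda\}(i)=\omega^{\lambda_1}n_1+\dots+\omega^{\lambda_k}(n_k-1)+\omega^{\xi}\cdot i$ if $\lambda_k=\xi+1$. *)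

theory Defs
  imports Main
begin

text \<open>OZ denotes 0, OP a b denotes omega^a + b. A notation is in normal form (nf)
  iff the exponents are weakly decreasing; normal-form notations are in
  order-preserving bijection with the ordinals below epsilon_0.
  (omega^a * n is written as n repeated summands omega^a.)\<close>

datatype ordn = OZ | OP ordn ordn

fun ord_lt :: "ordn \<Rightarrow> ordn \<Rightarrow> bool" where
  "ord_lt OZ OZ = False"
| "ord_lt OZ (OP _ _) = True"
| "ord_lt (OP _ _) OZ = False"
| "ord_lt (OP a b) (OP c d) = (ord_lt a c \<or> (a = c \<and> ord_lt b d))"

definition ord_le :: "ordn \<Rightarrow> ordn \<Rightarrow> bool" where
  "ord_le a b \<longleftrightarrow> a = b \<or> ord_lt a b"

fun nf :: "ordn \<Rightarrow> bool" where
  "nf OZ = True"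
| "nf (OP a b) = (nf a \<and> nf b \<and> (case b of OZ \<Rightarrow> True | OP c d \<Rightarrow> \<not> ord_lt a c))"

definition one :: ordn where "one = OP OZ OZ"
definition omega2 :: ordn where "omega2 = OP (OP OZ (OP OZ OZ)) OZ"

fun lastexp :: "ordn \<Rightarrow> ordn" where
  "lastexp OZ = OZ"
| "lastexp (OP a b) = (if b = OZ then a else lastexp b)"

fun opred :: "ordn \<Rightarrow> ordn" where
  "opred OZ = OZ"
| "opred (OP a b) = (if b = OZ then OZ else OP a (opred b))"

definition is_succ :: "ordn \<Rightarrow> bool" where
  "is_succ \<alpha> \<longleftrightarrow> \<alpha> \<noteq> OZ \<and> lastexp \<alpha> = OZ"

definition is_limit :: "ordn \<Rightarrow> bool" where
  "is_limit \<alpha> \<longleftrightarrow> \<alpha> \<noteq> OZ \<and> lastexp \<alpha> \<noteq> OZ"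

fun rep :: "nat \<Rightarrow> ordn \<Rightarrow> ordn \<Rightarrow> ordn" where
  "rep 0 x t = t"
| "rep (Suc n) x t = OP x (rep n x t)"

text \<open>The Cantor-normal-form fundamental sequences of part (ii): the last summand
  omega^(lambda_k) is replaced by omega^({lambda_k}(i)) if lambda_k is a limit and by
  omega^xi * i if lambda_k = xi + 1.\<close>
fun fs_cnf :: "ordn \<Rightarrow> nat \<Rightarrow> ordn" where
  "fs_cnf OZ i = OZ"
| "fs_cnf (OP a b) i =
     (if b = OZ then
        (if a = OZ then OZ
         else if lastexp a = OZ then rep i (opred a) OZ
         else OP (fs_cnf a i) OZ)
      else OP a (fs_cnf b i))"

definition valid_fs_below_omega2 :: "(ordn \<Rightarrow> nat \<Rightarrow> ordn) \<Rightarrow> bool" where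
  "valid_fs_below_omega2 f \<longleftrightarrow>
     (\<forall>l. nf l \<and> is_limit l \<and> ord_lt l omega2 \<longrightarrow>
        (\<forall>i. nf (f l i) \<and> ord_lt (f l i) l \<and> ord_lt (f l i) (f l (Suc i))) \<and>
        (\<forall>\<beta>. nf \<beta> \<and> ord_lt \<beta> l \<longrightarrow> (\<exists>i. ord_le \<beta> (f l i))))"

inductive in_tau :: "(ordn \<Rightarrow> nat \<Rightarrow> ordn) \<Rightarrow> ordn \<Rightarrow> nat list \<Rightarrow> bool" for f where
  root: "in_tau f \<alpha> []"
| succ: "is_succ \<alpha> \<Longrightarrow> in_tau f (opred \<alpha>) s \<Longrightarrow> in_tau f \<alpha> (i # s)"
| lim: "is_limit \<alpha> \<Longrightarrow> in_tau f (f \<alpha> i) s \<Longrightarrow> in_tau f \<alpha> (i # s)"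

definition tau :: "(ordn \<Rightarrow> nat \<Rightarrow> ordn) \<Rightarrow> ordn \<Rightarrow> nat list set" where
  "tau f \<alpha> = {s. in_tau f \<alpha> s}"

text \<open>rk_tau(s) = 0 unfolds to: s is in tau and has no child in tau.\<close>
definition rank0 :: "nat list set \<Rightarrow> nat list \<Rightarrow> bool" where
  "rank0 t s \<longleftrightarrow> s \<in> t \<and> (\<forall>i. s @ [i] \<notin> t)"

datatype psym = P "nat list" | U nat

datatype fm = FF | Atom psym nat | Eq nat nat | Neg fm | Conj fm fm | Disj fm fm
  | Imp fm fm | Ex nat fm | All nat fm

fun fv :: "fm \<Rightarrow> nat set" where
  "fv FF = {}"
| "fv (Atom _ v) = {v}"
| "fv (Eq u v) = {u, v}"
| "fv (Neg \<phi>) = fv \<phi>"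
| "fv (Conj \<phi> \<psi>) = fv \<phi> \<union> fv \<psi>"
| "fv (Disj \<phi> \<psi>) = fv \<phi> \<union> fv \<psi>"
| "fv (Imp \<phi> \<psi>) = fv \<phi> \<union> fv \<psi>"
| "fv (Ex v \<phi>) = fv \<phi> - {v}"
| "fv (All v \<phi>) = fv \<phi> - {v}"

fun preds :: "fm \<Rightarrow> psym set" where
  "preds FF = {}"
| "preds (Atom R _) = {R}"
| "preds (Eq _ _) = {}"
| "preds (Neg \<phi>) = preds \<phi>"
| "preds (Conj \<phi> \<psi>) = preds \<phi> \<union> preds \<psi>"
| "preds (Disj \<phi> \<psi>) = preds \<phi> \<union> preds \<psi>"
| "preds (Imp \<phi> \<psi>) = preds \<phi> \<union> preds \<psi>"
| "preds (Ex _ \<phi>) = preds \<phi>"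
| "preds (All _ \<phi>) = preds \<phi>"

fun sat :: "nat set \<Rightarrow> (psym \<Rightarrow> nat set) \<Rightarrow> (nat \<Rightarrow> nat) \<Rightarrow> fm \<Rightarrow> bool" where
  "sat D I e FF = False"
| "sat D I e (Atom R v) = (e v \<in> I R)"
| "sat D I e (Eq u v) = (e u = e v)"
| "sat D I e (Neg \<phi>) = (\<not> sat D I e \<phi>)"
| "sat D I e (Conj \<phi> \<psi>) = (sat D I e \<phi> \<and> sat D I e \<psi>)"
| "sat D I e (Disj \<phi> \<psi>) = (sat D I e \<phi> \<or> sat D I e \<psi>)"
| "sat D I e (Imp \<phi> \<psi>) = (sat D I e \<phi> \<longrightarrow> sat D I e \<psi>)"
| "sat D I e (Ex v \<phi>) = (\<exists>d\<in>D. sat D I (e(v := d)) \<phi>)"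
| "sat D I e (All v \<phi>) = (\<forall>d\<in>D. sat D I (e(v := d)) \<phi>)"

definition holds :: "nat set \<Rightarrow> (psym \<Rightarrow> nat set) \<Rightarrow> fm \<Rightarrow> bool" where
  "holds D I \<phi> \<longleftrightarrow> (\<forall>e. range e \<subseteq> D \<longrightarrow> sat D I e \<phi>)"

text \<open>Semantic consequence. Countable structures suffice for a countable language
  (downward Loewenheim-Skolem), so domains are taken to be nonempty sets of naturals.\<close>
definition entails :: "fm set \<Rightarrow> fm \<Rightarrow> bool" where
  "entails S \<phi> \<longleftrightarrow>
     (\<forall>(D::nat set) I. D \<noteq> {} \<longrightarrow> (\<forall>\<psi>\<in>S. holds D I \<psi>) \<longrightarrow> holds D I \<phi>)"

definition in_lang :: "psym set \<Rightarrow> fm \<Rightarrow> bool" where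
  "in_lang L \<phi> \<longleftrightarrow> preds \<phi> \<subseteq> L"

definition sentence :: "psym set \<Rightarrow> fm \<Rightarrow> bool" where
  "sentence L \<phi> \<longleftrightarrow> in_lang L \<phi> \<and> fv \<phi> = {}"

definition fo_closure :: "psym set \<Rightarrow> fm set \<Rightarrow> fm set" where
  "fo_closure L S = {\<sigma>. sentence L \<sigma> \<and> entails S \<sigma>}"

definition exs :: "nat list \<Rightarrow> fm \<Rightarrow> fm" where
  "exs xs \<phi> = foldr Ex xs \<phi>"

definition alls :: "nat list \<Rightarrow> fm \<Rightarrow> fm" where
  "alls xs \<phi> = foldr All xs \<phi>"

fun bigAnd :: "fm list \<Rightarrow> fm" where
  "bigAnd [] = Neg FF"
| "bigAnd (\<phi> # \<phi>s) = Conj \<phi> (bigAnd \<phi>s)"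

definition pset :: "psym set \<Rightarrow> nat list \<Rightarrow> fm set \<Rightarrow> fm set \<Rightarrow> fm set" where
  "pset L xs p S =
     {Neg (exs xs \<phi>) | \<phi>. in_lang L \<phi> \<and> fv \<phi> \<subseteq> set xs \<and>
        (\<forall>\<psi>\<in>p. entails S (alls xs (Imp \<phi> \<psi>)))}"

definition jump :: "psym set \<Rightarrow> nat list \<Rightarrow> fm set \<Rightarrow> fm set \<Rightarrow> fm set" where
  "jump L xs p S = fo_closure L (S \<union> pset L xs p S)"

definition ord_rel :: "(ordn \<times> ordn) set" where
  "ord_rel = {(\<beta>, \<alpha>). nf \<beta> \<and> nf \<alpha> \<and> ord_lt \<beta> \<alpha>}"

definition iter :: "psym set \<Rightarrow> nat list \<Rightarrow> fm set \<Rightarrow> fm set \<Rightarrow> ordn \<Rightarrow> fm set" where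
  "iter L xs p T = wfrec ord_rel (\<lambda>rec \<alpha>.
      if \<alpha> = OZ then fo_closure L T
      else if is_succ \<alpha> then jump L xs p (rec (opred \<alpha>))
      else \<Union>{rec \<beta> | \<beta>. nf \<beta> \<and> ord_lt \<beta> \<alpha>})"

text \<open>[T]^p_infinity = union of all [T]^p_alpha over all ordinals; since the stages
  increase and [.]^p is monotone, this is the least set containing the closure of T
  and closed under [.]^p.\<close>
definition iter_inf :: "psym set \<Rightarrow> nat list \<Rightarrow> fm set \<Rightarrow> fm set \<Rightarrow> fm set" where
  "iter_inf L xs p T = \<Inter>{S. fo_closure L T \<subseteq> S \<and> jump L xs p S \<subseteq> S}"

definition rank_is :: "psym set \<Rightarrow> nat list \<Rightarrow> fm set \<Rightarrow> fm set \<Rightarrow> ordn \<Rightarrow> bool" where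
  "rank_is L xs p T \<alpha> \<longleftrightarrow>
     iter L xs p T \<alpha> = iter_inf L xs p T \<and>
     (\<forall>\<beta>. nf \<beta> \<and> ord_lt \<beta> \<alpha> \<longrightarrow> iter L xs p T \<beta> \<noteq> iter_inf L xs p T)"

definition lang_tau :: "nat list set \<Rightarrow> psym set" where
  "lang_tau t = {P s | s. s \<in> t \<and> s \<noteq> []} \<union> range U"

definition exists_ge :: "nat \<Rightarrow> fm" where
  "exists_ge i = (let vs = [1..<i+1] in
     exs vs (Conj (bigAnd [Neg (Eq a b). a \<leftarrow> vs, b \<leftarrow> vs, a < b])
                  (bigAnd [Atom (U j) a. a \<leftarrow> vs, j \<leftarrow> [0..<i+1]])))"

definition T_tau :: "nat list set \<Rightarrow> fm set" where
  "T_tau t =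
     {Imp (Neg (Ex 0 (Atom (P (s @ [i])) 0))) (All 0 (Imp (Atom (P s) 0) (Atom (U i) 0)))
       | s i. s @ [i] \<in> t \<and> s \<noteq> []}
   \<union> {All 0 (Imp (Atom (P s) 0) (Atom (U i) 0)) | s i. rank0 t s \<and> s \<noteq> []}
   \<union> {exists_ge i | i. True}"

definition p_U :: "fm set" where
  "p_U = {Atom (U i) 0 | i. True}"

definition rk_tau_is :: "(ordn \<Rightarrow> nat \<Rightarrow> ordn) \<Rightarrow> ordn \<Rightarrow> bool" where
  "rk_tau_is f \<alpha> \<longleftrightarrow>
     rank_is (lang_tau (tau f \<alpha>)) [0] p_U (T_tau (tau f \<alpha>)) \<alpha>"

end

theory Submission
  imports Defs
begin

(*
  Label every node s of tau_alpha with the ordinal lab s for which the subtree of tau_alpha at s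
  is tau_(lab s). The gamma-th stage [T_tau]^p_gamma is then axiomatised by T_tau together with
  "P_s is empty" for the nodes with lab s < gamma; semantically, its models are the models of
  T_tau in which these P_s are empty (K_model).

  These sentences do enter: once every child of s is empty, the axioms of T_tau give
  P_s(x) |- U_i(x) for all i, so P_s(x) isolates p, and at a limit the fundamental sequence
  reaches beyond lab s. Nothing else enters: if phi(x) is realised by a in a model in which P_s
  is empty for lab s <= beta, take a out of a fresh U_m and add an element c that looks, to the
  finitely many predicates of phi, like infinitely many old elements (so the truth of phi is
  unchanged), takes over the remaining memberships of a, and populates a fresh child s@[m] of
  every node s containing a. As lab (s@[m]) >= beta, the result is a model of the beta-th stage
  realising phi(x) and not U_m(x), so phi(x) does not isolate p over that stage.

  Hence the alpha-th stage is closed (a sentence mentions finitely many P_s, all emptied at some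
  non-limit stage up to alpha), whereas for beta < alpha a child i of the root has lab i >= beta,
  and P_i is nonempty in a model of the beta-th stage.
*)

section \<open>Ordinal notations\<close>

lemma ord_lt_irrefl: "\<not> ord_lt a a"
  by (induction a) auto

lemma ord_lt_trans: "ord_lt a b \<Longrightarrow> ord_lt b c \<Longrightarrow> ord_lt a c"
proof (induction a arbitrary: b c)
  case OZ
  then show ?case by (cases b; cases c) auto
next
  case (OP a1 a2)
  obtain b1 b2 where b: "b = OP b1 b2" using OP.prems by (cases b) auto
  obtain c1 c2 where c: "c = OP c1 c2" using OP.prems b by (cases c) auto
  have "ord_lt a1 b1 \<or> a1 = b1 \<and> ord_lt a2 b2" "ord_lt b1 c1 \<or> b1 = c1 \<and> ord_lt b2 c2"
    using OP.prems b c by simp_all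
  then have "ord_lt a1 c1 \<or> a1 = c1 \<and> ord_lt a2 c2"
    using OP.IH(1)[of b1 c1] OP.IH(2)[of b2 c2] by blast
  then show ?case using c by simp
qed

lemma ord_lt_linear: "ord_lt a b \<or> a = b \<or> ord_lt b a"
proof (induction a arbitrary: b)
  case OZ
  then show ?case by (cases b) auto
next
  case (OP a1 a2)
  then show ?case by (cases b) auto
qed

instantiation ordn :: linorder
begin

definition less_ordn :: "ordn \<Rightarrow> ordn \<Rightarrow> bool" where
  "less_ordn = ord_lt"

definition less_eq_ordn :: "ordn \<Rightarrow> ordn \<Rightarrow> bool" where
  "less_eq_ordn = ord_le"

instance
proof
  fix a b c :: ordn
  show "a < b \<longleftrightarrow> a \<le> b \<and> \<not> b \<le> a"
    unfolding less_ordn_def less_eq_ordn_def ord_le_def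
    using ord_lt_irrefl ord_lt_trans by blast
  show "a \<le> a"
    by (simp add: less_eq_ordn_def ord_le_def)
  show "a \<le> b \<Longrightarrow> b \<le> c \<Longrightarrow> a \<le> c"
    unfolding less_eq_ordn_def ord_le_def using ord_lt_trans by blast
  show "a \<le> b \<Longrightarrow> b \<le> a \<Longrightarrow> a = b"
    unfolding less_eq_ordn_def ord_le_def using ord_lt_irrefl ord_lt_trans by blast
  show "a \<le> b \<or> b \<le> a"
    unfolding less_eq_ordn_def ord_le_def using ord_lt_linear by blast
qed

end

lemma not_less_OZ [simp]: "\<not> a < OZ"
  by (cases a) (simp_all add: less_ordn_def)

lemma OZ_less_OP [simp]: "OZ < OP a b"
  by (simp add: less_ordn_def)

lemma OP_less_OP_iff [simp]: "OP a b < OP c d \<longleftrightarrow> a < c \<or> a = c \<and> b < d"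
  by (simp add: less_ordn_def)

lemma ord_lt_iff_less [simp]: "ord_lt a b \<longleftrightarrow> a < b"
  by (simp add: less_ordn_def)

lemma ord_le_iff_less_eq [simp]: "ord_le a b \<longleftrightarrow> a \<le> b"
  by (simp add: less_eq_ordn_def)

lemma OZ_less_iff: "OZ < a \<longleftrightarrow> a \<noteq> OZ"
  by (cases a) simp_all

lemma OZ_least [simp]: "OZ \<le> a"
  by (cases a) (simp_all add: le_less)

lemma le_OZ_iff [simp]: "a \<le> OZ \<longleftrightarrow> a = OZ"
  using OZ_least antisym by blast

lemma nf_OP_OZ [simp]: "nf (OP a OZ) \<longleftrightarrow> nf a"
  by simp

lemma nf_OP_OP [simp]: "nf (OP a (OP c d)) \<longleftrightarrow> nf a \<and> nf (OP c d) \<and> c \<le> a"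
  by (simp add: not_less)

lemma nf_OP_D: "nf (OP a b) \<Longrightarrow> nf a \<and> nf b"
  by simp

declare nf.simps(2) [simp del]

lemma in_ord_rel_iff [simp]: "(\<beta>, \<alpha>) \<in> ord_rel \<longleftrightarrow> nf \<beta> \<and> nf \<alpha> \<and> \<beta> < \<alpha>"
  by (simp add: ord_rel_def)

lemma nf_tail_less: "nf (OP a b) \<Longrightarrow> b < OP a b"
proof (induction b arbitrary: a)
  case (OP c d)
  have "nf (OP c d)" "c \<le> a"
    using OP.prems by simp_all
  then show ?case
    using OP.IH(2)[of c] by (auto simp: le_less)
qed simp

lemma nf_OP_mono_head: "nf (OP c x) \<Longrightarrow> c \<le> a \<Longrightarrow> nf a \<Longrightarrow> nf (OP a x)"
  by (cases x) (auto intro: order_trans)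

lemma OP_in_acc_ord_rel:
  "a \<in> Wellfounded.acc ord_rel \<Longrightarrow> b \<in> Wellfounded.acc ord_rel \<Longrightarrow> nf (OP a b)
    \<Longrightarrow> OP a b \<in> Wellfounded.acc ord_rel"
proof (induction a arbitrary: b rule: acc_induct_rule)
  case (1 a)
  note IH_a = "1.IH"
  from "1.prems" show ?case
  proof (induction b rule: acc_induct_rule)
    case (1 b)
    note IH_b = "1.IH"
    have nf_a: "nf a" and nf_b: "nf b"
      using "1.prems" nf_OP_D by blast+
    have below: "z \<in> Wellfounded.acc ord_rel" if "nf z" "z < OP a b" for z
      using that
    proof (induction z)
      case OZ
      show ?case by (rule accI) simp
    next
      case (OP c d)
      have nf_c: "nf c" and nf_d: "nf d"
        using OP.prems(1) nf_OP_D by blast+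
      have "d < OP a b"
        using nf_tail_less[OF OP.prems(1)] OP.prems(2) by (rule less_trans)
      then have d_acc: "d \<in> Wellfounded.acc ord_rel"
        using OP.IH(2) nf_d by blast
      have "c < a \<or> c = a \<and> d < b"
        using OP.prems(2) by simp
      then show ?case
      proof
        assume "c < a"
        then show ?thesis
          using IH_a[of c d] nf_a nf_c d_acc OP.prems(1) by simp
      next
        assume "c = a \<and> d < b"
        then show ?thesis
          using IH_b[of d] nf_b nf_d OP.prems(1) by simp
      qed
    qed
    show ?case
      by (rule accI) (simp add: below)
  qed
qed

text \<open>Normal forms matter: on all notations the order has the descending chain
  \<open>\<omega> > 1 + \<omega> > 1 + 1 + \<omega> > \<dots>\<close>\<close>
lemma wf_ord_rel: "wf ord_rel"
proof (rule acc_wfI, rule allI)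
  fix a
  show "a \<in> Wellfounded.acc ord_rel"
  proof (cases "nf a")
    case True
    then show ?thesis
    proof (induction a)
      case OZ
      show ?case by (rule accI) simp
    next
      case (OP a b)
      then show ?case
        using OP_in_acc_ord_rel nf_OP_D by blast
    qed
  next
    case False
    then show ?thesis by - (rule accI, simp)
  qed
qed

lemma is_succ_not_limit: "is_succ a \<Longrightarrow> \<not> is_limit a"
  by (simp add: is_succ_def is_limit_def)

lemma ordn_cases [case_names zero succ limit]:
  obtains "a = OZ" | "is_succ a" | "is_limit a"
  unfolding is_succ_def is_limit_def by blast

lemma nf_opred: "nf a \<Longrightarrow> nf (opred a)"
proof (induction a)
  case (OP a b)
  then show ?case
    by (cases b) (auto intro: nf_OP_mono_head dest: nf_OP_D)
qed simp

lemma opred_less: "a \<noteq> OZ \<Longrightarrow> opred a < a"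
proof (induction a)
  case (OP a b)
  then show ?case by (cases "b = OZ") auto
qed simp

lemma less_succ_imp_le_opred: "is_succ a \<Longrightarrow> \<beta> < a \<Longrightarrow> \<beta> \<le> opred a"
proof (induction a arbitrary: \<beta>)
  case OZ
  then show ?case by simp
next
  case (OP a b)
  show ?case
  proof (cases "b = OZ")
    case True
    then have "a = OZ" using OP.prems(1) by (simp add: is_succ_def)
    then show ?thesis using OP.prems(2) True by (cases \<beta>) auto
  next
    case False
    then have "is_succ b" using OP.prems(1) by (simp add: is_succ_def)
    show ?thesis
    proof (cases \<beta>)
      case (OP c d)
      then have "c < a \<or> c = a \<and> d < b" using OP.prems(2) by simp
      then show ?thesis
        using OP.IH(2)[OF \<open>is_succ b\<close>, of d] False \<open>\<beta> = OP c d\<close> by (auto simp: le_less)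
    qed simp
  qed
qed

lemma nf_induct [consumes 1, case_names zero succ limit]:
  assumes "nf \<alpha>"
    and "Q OZ"
    and "\<And>\<alpha>. nf \<alpha> \<Longrightarrow> is_succ \<alpha> \<Longrightarrow> Q (opred \<alpha>) \<Longrightarrow> Q \<alpha>"
    and "\<And>\<alpha>. nf \<alpha> \<Longrightarrow> is_limit \<alpha> \<Longrightarrow> (\<And>\<beta>. nf \<beta> \<Longrightarrow> \<beta> < \<alpha> \<Longrightarrow> Q \<beta>) \<Longrightarrow> Q \<alpha>"
  shows "Q \<alpha>"
  using wf_ord_rel \<open>nf \<alpha>\<close>
proof (induction \<alpha> rule: wf_induct_rule)
  case (less \<alpha>)
  show ?case
  proof (cases \<alpha> rule: ordn_cases)
    case zero
    then show ?thesis using assms(2) by simp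
  next
    case succ
    have "nf (opred \<alpha>)" "opred \<alpha> < \<alpha>"
      using less.prems succ nf_opred opred_less by (auto simp: is_succ_def)
    then show ?thesis
      using assms(3) less succ by simp
  next
    case limit
    then show ?thesis
      using assms(4) less by simp
  qed
qed

fun osucc :: "ordn \<Rightarrow> ordn" where
  "osucc OZ = OP OZ OZ"
| "osucc (OP a b) = OP a (osucc b)"

lemma nf_osucc: "nf a \<Longrightarrow> nf (osucc a)"
proof (induction a)
  case (OP a b)
  then show ?case
    by (cases b) (auto intro: nf_OP_mono_head dest: nf_OP_D)
qed simp

lemma is_succ_osucc: "is_succ (osucc a)"
proof -
  have "lastexp (osucc a) = OZ" "osucc a \<noteq> OZ"
    by (induction a) auto
  then show ?thesis by (simp add: is_succ_def)
qed

lemma less_osucc: "a < osucc a"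
  by (induction a) auto

lemma osucc_le_iff_less: "osucc a \<le> b \<longleftrightarrow> a < b"
proof (induction a arbitrary: b)
  case OZ
  then show ?case by (cases b) (auto simp: le_less OZ_less_iff)
next
  case (OP a1 a2)
  then show ?case by (cases b) (auto simp: le_less)
qed

lemma finite_set_has_bound_below:
  assumes "finite S" "\<forall>x\<in>S. nf x \<and> x < \<alpha>" "\<alpha> \<noteq> OZ"
  shows "\<exists>\<delta>. nf \<delta> \<and> \<delta> < \<alpha> \<and> (\<forall>x\<in>S. x \<le> \<delta>)"
  using assms
proof (induction S rule: finite_induct)
  case empty
  then show ?case by (intro exI[of _ OZ]) (simp add: OZ_less_iff)
next
  case (insert x S)
  then obtain \<delta> where "nf \<delta>" "\<delta> < \<alpha>" "\<forall>y\<in>S. y \<le> \<delta>" by auto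
  then show ?case
    using insert.prems by (intro exI[of _ "max x \<delta>"]) (auto simp: max_def)
qed

lemma finite_set_has_nonlimit_bound:
  assumes "nf \<alpha>" "finite S" "\<forall>x\<in>S. nf x \<and> x < \<alpha>"
  shows "\<exists>\<gamma>. nf \<gamma> \<and> \<not> is_limit \<gamma> \<and> \<gamma> \<le> \<alpha> \<and> (\<forall>x\<in>S. x < \<gamma>)"
proof (cases "is_limit \<alpha>")
  case True
  then obtain \<delta> where \<delta>: "nf \<delta>" "\<delta> < \<alpha>" "\<forall>x\<in>S. x \<le> \<delta>"
    using finite_set_has_bound_below[OF assms(2,3)] by (auto simp: is_limit_def)
  show ?thesis
  proof (intro exI conjI)
    show "nf (osucc \<delta>)" "\<not> is_limit (osucc \<delta>)" "osucc \<delta> \<le> \<alpha>"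
      using \<delta> nf_osucc is_succ_osucc is_succ_not_limit osucc_le_iff_less by auto
    show "\<forall>x\<in>S. x < osucc \<delta>"
      using \<delta>(3) less_osucc by (blast intro: le_less_trans)
  qed
qed (use assms in auto)

lemma nf_OP_rep: "nf a \<Longrightarrow> nf x \<Longrightarrow> x \<le> a \<Longrightarrow> nf (OP a (rep i x OZ))"
  by (induction i arbitrary: a) auto

lemma rep_less_OP_rep: "rep i x OZ < OP x (rep i x OZ)"
  by (induction i) auto

lemma rep_less_OP: "x < a \<Longrightarrow> rep i x OZ < OP a OZ"
  by (cases i) auto

lemma le_rep:
  assumes "nf (OP x \<beta>)"
  shows "\<exists>i. \<beta> \<le> rep i x OZ"
  using assms
proof (induction \<beta>)
  case OZ
  then show ?case by auto
next
  case (OP c d)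
  have "c \<le> x" "nf (OP x d)"
    using OP.prems by (auto intro: nf_OP_mono_head dest: nf_OP_D)
  moreover obtain i where "d \<le> rep i x OZ"
    using OP.IH(2) \<open>nf (OP x d)\<close> by blast
  ultimately have "OP c d \<le> rep (Suc i) x OZ"
    by (auto simp: le_less)
  then show ?case by blast
qed

lemma nf_limit_induct [consumes 2, case_names succ_exp limit_exp limit_tail]:
  assumes "nf l" "is_limit l"
    and "\<And>a. nf a \<Longrightarrow> is_succ a \<Longrightarrow> Q (OP a OZ)"
    and "\<And>a. nf a \<Longrightarrow> is_limit a \<Longrightarrow> Q a \<Longrightarrow> Q (OP a OZ)"
    and "\<And>a b. nf (OP a b) \<Longrightarrow> is_limit b \<Longrightarrow> Q b \<Longrightarrow> Q (OP a b)"
  shows "Q l"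
  using assms(1,2)
proof (induction l)
  case (OP a b)
  then have "nf a" "nf b"
    using nf_OP_D by blast+
  show ?case
  proof (cases "b = OZ")
    case True
    then show ?thesis
      using OP \<open>nf a\<close> assms(3,4) by (auto simp: is_limit_def is_succ_def)
  next
    case False
    then show ?thesis
      using OP \<open>nf b\<close> assms(5) by (simp add: is_limit_def)
  qed
qed (simp add: is_limit_def)

lemma fs_cnf_OP_succ: "is_succ a \<Longrightarrow> fs_cnf (OP a OZ) i = rep i (opred a) OZ"
  by (simp add: is_succ_def)

lemma fs_cnf_OP_limit: "is_limit a \<Longrightarrow> fs_cnf (OP a OZ) i = OP (fs_cnf a i) OZ"
  by (simp add: is_limit_def)

lemma fs_cnf_OP_tail: "is_limit b \<Longrightarrow> fs_cnf (OP a b) i = OP a (fs_cnf b i)"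
  by (simp add: is_limit_def)

declare fs_cnf.simps(2) [simp del]

lemma fs_cnf_less: "nf l \<Longrightarrow> is_limit l \<Longrightarrow> fs_cnf l i < l"
proof (induction l rule: nf_limit_induct)
  case (succ_exp a)
  then show ?case
    using opred_less by (simp add: fs_cnf_OP_succ rep_less_OP is_succ_def)
qed (simp_all add: fs_cnf_OP_limit fs_cnf_OP_tail)

lemma fs_cnf_less_Suc: "nf l \<Longrightarrow> is_limit l \<Longrightarrow> fs_cnf l i < fs_cnf l (Suc i)"
  by (induction l rule: nf_limit_induct)
    (simp_all add: fs_cnf_OP_succ fs_cnf_OP_limit fs_cnf_OP_tail rep_less_OP_rep)

lemma nf_OP_fs_cnf: "nf l \<Longrightarrow> is_limit l \<Longrightarrow> l = OP a b \<Longrightarrow> nf (OP a (fs_cnf l i))"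
proof (induction l arbitrary: a b rule: nf_limit_induct)
  case (succ_exp a')
  then have "opred a \<le> a" "nf (opred a)"
    using opred_less nf_opred by (auto simp: is_succ_def less_imp_le)
  then show ?case
    using succ_exp nf_OP_rep by (simp add: fs_cnf_OP_succ)
next
  case (limit_exp a')
  then obtain a1 a2 where "a = OP a1 a2"
    by (cases a) (auto simp: is_limit_def)
  then have "nf (fs_cnf a i)"
    using limit_exp nf_OP_D by blast
  moreover have "fs_cnf a i \<le> a"
    using fs_cnf_less limit_exp by (simp add: less_imp_le)
  ultimately show ?case
    using limit_exp by (simp add: fs_cnf_OP_limit)
next
  case (limit_tail a' b')
  then obtain c d where "b = OP c d"
    by (cases b) (auto simp: is_limit_def)
  moreover have "nf a"
    using limit_tail nf_OP_D by blast
  ultimately have "nf (OP c (fs_cnf b i))" "c \<le> a"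
    using limit_tail by simp_all
  then have "nf (OP a (fs_cnf b i))"
    using nf_OP_mono_head \<open>nf a\<close> by blast
  then show ?case
    using limit_tail \<open>nf a\<close> by (simp add: fs_cnf_OP_tail)
qed

lemma fs_cnf_cofinal: "nf l \<Longrightarrow> is_limit l \<Longrightarrow> nf \<beta> \<Longrightarrow> \<beta> < l \<Longrightarrow> \<exists>i. \<beta> \<le> fs_cnf l i"
proof (induction l arbitrary: \<beta> rule: nf_limit_induct)
  case (succ_exp a)
  show ?case
  proof (cases \<beta>)
    case (OP c d)
    then have "c \<le> opred a"
      using succ_exp less_succ_imp_le_opred by simp
    then have "nf (OP (opred a) \<beta>)"
      using succ_exp OP nf_opred by simp
    then show ?thesis
      using le_rep succ_exp by (simp add: fs_cnf_OP_succ)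
  qed simp
next
  case (limit_exp a)
  show ?case
  proof (cases \<beta>)
    case (OP c d)
    have "c < a"
      using limit_exp.prems(2) OP by simp
    moreover have "nf c"
      using limit_exp.prems(1) OP nf_OP_D by blast
    ultimately obtain i where "c \<le> fs_cnf a i"
      using limit_exp.IH by blast
    then have "c < fs_cnf a (Suc i)"
      using fs_cnf_less_Suc[OF limit_exp.hyps] by (rule le_less_trans)
    then show ?thesis
      using OP limit_exp.hyps(2) by (intro exI[of _ "Suc i"]) (simp add: fs_cnf_OP_limit le_less)
  qed simp
next
  case (limit_tail a b)
  show ?case
  proof (cases \<beta>)
    case (OP c d)
    then have "c < a \<or> c = a \<and> d < b"
      using limit_tail.prems(2) by simp
    then show ?thesis
    proof
      assume "c < a"
      then show ?thesis
        using OP limit_tail.hyps(2) by (intro exI[of _ 0]) (simp add: fs_cnf_OP_tail le_less)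
    next
      assume "c = a \<and> d < b"
      moreover have "nf d"
        using limit_tail.prems(1) OP nf_OP_D by blast
      ultimately obtain i where "d \<le> fs_cnf b i"
        using limit_tail.IH by blast
      then show ?thesis
        using \<open>c = a \<and> d < b\<close> OP limit_tail.hyps(2)
        by (intro exI[of _ i]) (auto simp: fs_cnf_OP_tail le_less)
    qed
  qed simp
qed

section \<open>The stages of the iteration\<close>

lemma holds_if_in_fo_closure:
  "\<sigma> \<in> fo_closure L S \<Longrightarrow> D \<noteq> {} \<Longrightarrow> \<forall>\<psi>\<in>S. holds D I \<psi> \<Longrightarrow> holds D I \<sigma>"
  unfolding fo_closure_def entails_def by blast

lemma sentences_subset_fo_closure: "\<forall>\<sigma>\<in>S. sentence L \<sigma> \<Longrightarrow> S \<subseteq> fo_closure L (S \<union> X)"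
  unfolding fo_closure_def entails_def by blast

lemma entails_mono: "entails S \<sigma> \<Longrightarrow> S \<subseteq> S' \<Longrightarrow> entails S' \<sigma>"
  unfolding entails_def by blast

lemma pset_mono: "S \<subseteq> S' \<Longrightarrow> pset L xs p S \<subseteq> pset L xs p S'"
  unfolding pset_def using entails_mono by blast

lemma jump_mono: "S \<subseteq> S' \<Longrightarrow> jump L xs p S \<subseteq> jump L xs p S'"
proof -
  assume "S \<subseteq> S'"
  then have "S \<union> pset L xs p S \<subseteq> S' \<union> pset L xs p S'"
    using pset_mono by blast
  then show ?thesis
    unfolding jump_def fo_closure_def using entails_mono by blast
qed

lemma iter_unfold:
  "iter L xs p T \<alpha> =
     (if \<alpha> = OZ then fo_closure L T
      else if is_succ \<alpha> then jump L xs p (cut (iter L xs p T) ord_rel \<alpha> (opred \<alpha>))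
      else \<Union>{cut (iter L xs p T) ord_rel \<alpha> \<beta> | \<beta>. nf \<beta> \<and> ord_lt \<beta> \<alpha>})"
  unfolding iter_def by (subst wfrec[OF wf_ord_rel]) simp

lemma iter_OZ: "iter L xs p T OZ = fo_closure L T"
  by (subst iter_unfold) simp

lemma iter_succ: "nf \<alpha> \<Longrightarrow> is_succ \<alpha> \<Longrightarrow> iter L xs p T \<alpha> = jump L xs p (iter L xs p T (opred \<alpha>))"
  by (subst iter_unfold) (auto simp: is_succ_def cut_apply nf_opred opred_less)

lemma iter_limit:
  "nf \<alpha> \<Longrightarrow> is_limit \<alpha> \<Longrightarrow> iter L xs p T \<alpha> = (\<Union>\<beta>\<in>{\<beta>. nf \<beta> \<and> \<beta> < \<alpha>}. iter L xs p T \<beta>)"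
  by (subst iter_unfold) (auto simp: is_limit_def cut_apply dest: is_succ_not_limit)

lemma sentence_if_in_iter: "nf \<gamma> \<Longrightarrow> \<sigma> \<in> iter L xs p T \<gamma> \<Longrightarrow> sentence L \<sigma>"
proof (induction \<gamma> arbitrary: \<sigma> rule: nf_induct)
  case zero
  then show ?case by (simp add: iter_OZ fo_closure_def)
next
  case (succ \<gamma>)
  then show ?case by (simp add: iter_succ jump_def fo_closure_def)
next
  case (limit \<gamma>)
  then show ?case by (auto simp: iter_limit)
qed

lemma iter_mono: "nf \<gamma> \<Longrightarrow> nf \<beta> \<Longrightarrow> \<beta> \<le> \<gamma> \<Longrightarrow> iter L xs p T \<beta> \<subseteq> iter L xs p T \<gamma>"
proof (induction \<gamma> arbitrary: \<beta> rule: nf_induct)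
  case zero
  then show ?case by simp
next
  case (succ \<gamma>)
  show ?case
  proof (cases "\<beta> = \<gamma>")
    case False
    then have "\<beta> \<le> opred \<gamma>"
      using succ.hyps(2) succ.prems(2) less_succ_imp_le_opred by simp
    then have "iter L xs p T \<beta> \<subseteq> iter L xs p T (opred \<gamma>)"
      using succ.IH succ.prems(1) by blast
    also have "\<dots> \<subseteq> iter L xs p T \<gamma>"
      unfolding iter_succ[OF succ.hyps] jump_def
      by (rule sentences_subset_fo_closure)
        (use sentence_if_in_iter nf_opred succ.hyps(1) in blast)
    finally show ?thesis .
  qed simp
next
  case (limit \<gamma>)
  show ?case
  proof (cases "\<beta> = \<gamma>")
    case False
    then show ?thesis
      using limit.prems limit.hyps by (subst (2) iter_limit) auto
  qed simp
qed

lemma fo_closure_subset_iter: "nf \<gamma> \<Longrightarrow> fo_closure L T \<subseteq> iter L xs p T \<gamma>"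
  using iter_mono[of \<gamma> OZ] by (simp add: iter_OZ)

lemma iter_subset_if_closed:
  assumes "fo_closure L T \<subseteq> S" "jump L xs p S \<subseteq> S"
  shows "nf \<gamma> \<Longrightarrow> iter L xs p T \<gamma> \<subseteq> S"
proof (induction \<gamma> rule: nf_induct)
  case zero
  then show ?case using assms(1) by (simp add: iter_OZ)
next
  case (succ \<gamma>)
  then have "jump L xs p (iter L xs p T (opred \<gamma>)) \<subseteq> S"
    using jump_mono assms(2) by blast
  then show ?case
    using iter_succ[OF succ.hyps] by simp
next
  case (limit \<gamma>)
  then show ?case by (subst iter_limit) auto
qed

lemma iter_eq_iter_inf_if_closed:
  assumes "nf \<alpha>" "jump L xs p (iter L xs p T \<alpha>) \<subseteq> iter L xs p T \<alpha>"
  shows "iter L xs p T \<alpha> = iter_inf L xs p T"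
proof
  show "iter L xs p T \<alpha> \<subseteq> iter_inf L xs p T"
    unfolding iter_inf_def using iter_subset_if_closed[OF _ _ assms(1)] by blast
  show "iter_inf L xs p T \<subseteq> iter L xs p T \<alpha>"
    unfolding iter_inf_def
    by (rule Inter_lower) (use fo_closure_subset_iter assms in blast)
qed

lemma rank_isI:
  assumes "nf \<alpha>" "jump L xs p (iter L xs p T \<alpha>) \<subseteq> iter L xs p T \<alpha>"
    and "\<And>\<beta>. nf \<beta> \<Longrightarrow> \<beta> < \<alpha> \<Longrightarrow> iter L xs p T \<beta> \<noteq> iter L xs p T \<alpha>"
  shows "rank_is L xs p T \<alpha>"
  using assms iter_eq_iter_inf_if_closed unfolding rank_is_def by simp

section \<open>Satisfaction\<close>

lemma sat_fv_cong: "\<forall>v\<in>fv \<phi>. e v = e' v \<Longrightarrow> sat D I e \<phi> \<longleftrightarrow> sat D I e' \<phi>"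
proof (induction \<phi> arbitrary: e e')
  case (Ex v \<phi>)
  have "sat D I (e(v := d)) \<phi> \<longleftrightarrow> sat D I (e'(v := d)) \<phi>" for d
    using Ex.prems by (intro Ex.IH) simp
  then show ?case by simp
next
  case (All v \<phi>)
  have "sat D I (e(v := d)) \<phi> \<longleftrightarrow> sat D I (e'(v := d)) \<phi>" for d
    using All.prems by (intro All.IH) simp
  then show ?case by simp
next
  case (Neg \<phi>)
  show ?case using Neg.prems Neg.IH[of e e'] by (simp add: ball_Un)
next
  case (Conj \<phi> \<psi>)
  show ?case using Conj.prems Conj.IH[of e e'] by (simp add: ball_Un)
next
  case (Disj \<phi> \<psi>)
  show ?case using Disj.prems Disj.IH[of e e'] by (simp add: ball_Un)
next
  case (Imp \<phi> \<psi>)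
  show ?case using Imp.prems Imp.IH[of e e'] by (simp add: ball_Un)
qed simp_all

lemma sat_preds_cong:
  "\<forall>R\<in>preds \<phi>. I R \<inter> D = I' R \<inter> D \<Longrightarrow> range e \<subseteq> D \<Longrightarrow> sat D I e \<phi> \<longleftrightarrow> sat D I' e \<phi>"
proof (induction \<phi> arbitrary: e)
  case (Atom R v)
  then show ?case by auto
next
  case (Ex v \<phi>)
  have "sat D I (e(v := d)) \<phi> \<longleftrightarrow> sat D I' (e(v := d)) \<phi>" if "d \<in> D" for d
    using Ex.prems that by (intro Ex.IH) auto
  then show ?case by simp
next
  case (All v \<phi>)
  have "sat D I (e(v := d)) \<phi> \<longleftrightarrow> sat D I' (e(v := d)) \<phi>" if "d \<in> D" for d
    using All.prems that by (intro All.IH) auto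
  then show ?case by simp
qed simp_all

lemma holds_preds_cong:
  assumes "\<forall>R\<in>preds \<sigma>. I R \<inter> D = I' R \<inter> D"
  shows "holds D I \<sigma> \<longleftrightarrow> holds D I' \<sigma>"
proof -
  have "range e \<subseteq> D \<Longrightarrow> sat D I e \<sigma> \<longleftrightarrow> sat D I' e \<sigma>" for e
    using sat_preds_cong[OF assms] .
  then show ?thesis
    unfolding holds_def by blast
qed

lemma sat_inj_image:
  assumes "inj_on h D"
  shows "\<forall>R\<in>preds \<phi>. \<forall>x\<in>D. x \<in> I R \<longleftrightarrow> h x \<in> I' R \<Longrightarrow> range e \<subseteq> D
    \<Longrightarrow> sat D I e \<phi> \<longleftrightarrow> sat (h ` D) I' (h \<circ> e) \<phi>"
proof (induction \<phi> arbitrary: e)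
  case (Atom R v)
  then show ?case by auto
next
  case (Eq u v)
  have "e u \<in> D" "e v \<in> D"
    using Eq.prems(2) by auto
  then show ?case using assms by (auto simp: inj_on_eq_iff)
next
  case (Ex v \<phi>)
  have "sat D I (e(v := d)) \<phi> \<longleftrightarrow> sat (h ` D) I' ((h \<circ> e)(v := h d)) \<phi>" if "d \<in> D" for d
  proof -
    have "sat D I (e(v := d)) \<phi> \<longleftrightarrow> sat (h ` D) I' (h \<circ> e(v := d)) \<phi>"
      using Ex.prems that by (intro Ex.IH) auto
    moreover have "h \<circ> e(v := d) = (h \<circ> e)(v := h d)"
      by auto
    ultimately show ?thesis
      by simp
  qed
  then show ?case by (simp add: comp_def)
next
  case (All v \<phi>)
  have "sat D I (e(v := d)) \<phi> \<longleftrightarrow> sat (h ` D) I' ((h \<circ> e)(v := h d)) \<phi>" if "d \<in> D" for d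
  proof -
    have "sat D I (e(v := d)) \<phi> \<longleftrightarrow> sat (h ` D) I' (h \<circ> e(v := d)) \<phi>"
      using All.prems that by (intro All.IH) auto
    moreover have "h \<circ> e(v := d) = (h \<circ> e)(v := h d)"
      by auto
    ultimately show ?thesis
      by simp
  qed
  then show ?case by (simp add: comp_def)
qed simp_all

lemma finite_fv: "finite (fv \<phi>)"
  by (induction \<phi>) auto

lemma finite_preds: "finite (preds \<phi>)"
  by (induction \<phi>) auto

lemma sat_swap_indiscernible:
  assumes "c \<in> D" "d \<in> D" "\<forall>R\<in>preds \<psi>. d \<in> I R \<longleftrightarrow> c \<in> I R" "range e \<subseteq> D"
    and "c \<notin> e ` (fv \<psi> - {v})" "d \<notin> e ` (fv \<psi> - {v})"
  shows "sat D I (e(v := c)) \<psi> \<longleftrightarrow> sat D I (e(v := d)) \<psi>"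
proof -
  define h where "h = id(c := d, d := c)"
  have inj: "inj_on h D"
    unfolding h_def by (rule inj_on_subset[OF _ subset_UNIV]) (auto simp: inj_def)
  have img: "h ` D = D"
  proof -
    have "h (h x) = x" for x by (simp add: h_def)
    moreover have "h ` D \<subseteq> D" using assms(1,2) by (auto simp: h_def)
    ultimately show ?thesis by (metis image_subset_iff subset_antisym subsetI imageI)
  qed
  have "\<forall>R\<in>preds \<psi>. \<forall>x\<in>D. x \<in> I R \<longleftrightarrow> h x \<in> I R"
    using assms(3) by (auto simp: h_def)
  moreover have "range (e(v := c)) \<subseteq> D"
    using assms(1,4) by auto
  ultimately have "sat D I (e(v := c)) \<psi> \<longleftrightarrow> sat D I (h \<circ> e(v := c)) \<psi>"
    using sat_inj_image[OF inj] img by metis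
  also have "\<dots> \<longleftrightarrow> sat D I (e(v := d)) \<psi>"
    by (rule sat_fv_cong) (use assms(5,6) in \<open>auto simp: h_def\<close>)
  finally show ?thesis .
qed

lemma exists_old_twin:
  assumes "c \<notin> D"
    and "\<forall>R\<in>A. \<forall>x\<in>D. x \<in> I' R \<longleftrightarrow> x \<in> I R"
    and "infinite {d\<in>D. \<forall>R\<in>A. d \<in> I R \<longleftrightarrow> c \<in> I' R}"
    and "preds \<psi> \<subseteq> A" "range e \<subseteq> D"
  shows "\<exists>d\<in>D. sat (insert c D) I' (e(v := c)) \<psi> \<longleftrightarrow> sat (insert c D) I' (e(v := d)) \<psi>"
proof -
  have "finite (e ` (fv \<psi> - {v}))"
    by (simp add: finite_fv)
  then have "infinite ({d\<in>D. \<forall>R\<in>A. d \<in> I R \<longleftrightarrow> c \<in> I' R} - e ` (fv \<psi> - {v}))"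
    using assms(3) by (rule Diff_infinite_finite)
  then obtain d where d: "d \<in> D" "\<forall>R\<in>A. d \<in> I R \<longleftrightarrow> c \<in> I' R" "d \<notin> e ` (fv \<psi> - {v})"
    using infinite_imp_nonempty by blast
  have "sat (insert c D) I' (e(v := c)) \<psi> \<longleftrightarrow> sat (insert c D) I' (e(v := d)) \<psi>"
  proof (rule sat_swap_indiscernible)
    show "\<forall>R\<in>preds \<psi>. d \<in> I' R \<longleftrightarrow> c \<in> I' R"
      using d(1,2) assms(1,2,4) by auto
    show "c \<notin> e ` (fv \<psi> - {v})"
      using assms(1,5) by auto
  qed (use d assms(5) in auto)
  then show ?thesis
    using d by blast
qed

text \<open>In a quantifier step \<open>c\<close> is traded for an old element of the same type over \<open>A\<close>
  (\<open>exists_old_twin\<close>).\<close>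
lemma sat_insert_indiscernible:
  assumes c: "c \<notin> D"
    and agree: "\<forall>R\<in>A. \<forall>x\<in>D. x \<in> I' R \<longleftrightarrow> x \<in> I R"
    and twins: "infinite {d\<in>D. \<forall>R\<in>A. d \<in> I R \<longleftrightarrow> c \<in> I' R}"
  shows "preds \<phi> \<subseteq> A \<Longrightarrow> range e \<subseteq> D \<Longrightarrow> sat (insert c D) I' e \<phi> \<longleftrightarrow> sat D I e \<phi>"
proof (induction \<phi> arbitrary: e)
  case (Atom R v)
  then show ?case using agree c by auto
next
  case (Ex v \<psi>)
  have "preds \<psi> \<subseteq> A" "range e \<subseteq> D"
    using Ex.prems by simp_all
  then obtain d\<^sub>0 where "d\<^sub>0 \<in> D" "sat (insert c D) I' (e(v := c)) \<psi> \<longleftrightarrow> sat (insert c D) I' (e(v := d\<^sub>0)) \<psi>"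
    using exists_old_twin[OF assms] by blast
  moreover have "d \<in> D \<Longrightarrow> sat (insert c D) I' (e(v := d)) \<psi> \<longleftrightarrow> sat D I (e(v := d)) \<psi>" for d
    using Ex.prems by (intro Ex.IH) auto
  ultimately show ?case by auto
next
  case (All v \<psi>)
  have "preds \<psi> \<subseteq> A" "range e \<subseteq> D"
    using All.prems by simp_all
  then obtain d\<^sub>0 where "d\<^sub>0 \<in> D" "sat (insert c D) I' (e(v := c)) \<psi> \<longleftrightarrow> sat (insert c D) I' (e(v := d\<^sub>0)) \<psi>"
    using exists_old_twin[OF assms] by blast
  moreover have "d \<in> D \<Longrightarrow> sat (insert c D) I' (e(v := d)) \<psi> \<longleftrightarrow> sat D I (e(v := d)) \<psi>" for d
    using All.prems by (intro All.IH) auto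
  ultimately show ?case by auto
qed simp_all

lemma sat_exs:
  "sat D I e (exs vs \<phi>) \<longleftrightarrow>
     (\<exists>e'. (\<forall>w. w \<notin> set vs \<longrightarrow> e' w = e w) \<and> (\<forall>w\<in>set vs. e' w \<in> D) \<and> sat D I e' \<phi>)"
proof (induction vs arbitrary: e)
  case Nil
  then show ?case by (auto simp: exs_def) (metis ext)
next
  case (Cons v vs)
  have "sat D I e (exs (v # vs) \<phi>) \<longleftrightarrow> (\<exists>d\<in>D. sat D I (e(v := d)) (exs vs \<phi>))"
    by (simp add: exs_def)
  also have "\<dots> \<longleftrightarrow> (\<exists>d\<in>D. \<exists>e'. (\<forall>w. w \<notin> set vs \<longrightarrow> e' w = (e(v := d)) w) \<and>
      (\<forall>w\<in>set vs. e' w \<in> D) \<and> sat D I e' \<phi>)"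
    using Cons.IH by simp
  also have "\<dots> \<longleftrightarrow> (\<exists>e'. (\<forall>w. w \<notin> set (v # vs) \<longrightarrow> e' w = e w) \<and>
      (\<forall>w\<in>set (v # vs). e' w \<in> D) \<and> sat D I e' \<phi>)"
  proof
    assume "\<exists>d\<in>D. \<exists>e'. (\<forall>w. w \<notin> set vs \<longrightarrow> e' w = (e(v := d)) w) \<and>
      (\<forall>w\<in>set vs. e' w \<in> D) \<and> sat D I e' \<phi>"
    then obtain d e' where e': "d \<in> D" "\<forall>w. w \<notin> set vs \<longrightarrow> e' w = (e(v := d)) w"
      "\<forall>w\<in>set vs. e' w \<in> D" "sat D I e' \<phi>"
      by blast
    have "e' w \<in> D" if "w \<in> set (v # vs)" for w
      using e'(1-3) that by (cases "w \<in> set vs") auto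
    then show "\<exists>e'. (\<forall>w. w \<notin> set (v # vs) \<longrightarrow> e' w = e w) \<and>
      (\<forall>w\<in>set (v # vs). e' w \<in> D) \<and> sat D I e' \<phi>"
      using e'(2,4) by (intro exI[of _ e']) auto
  next
    assume "\<exists>e'. (\<forall>w. w \<notin> set (v # vs) \<longrightarrow> e' w = e w) \<and>
      (\<forall>w\<in>set (v # vs). e' w \<in> D) \<and> sat D I e' \<phi>"
    then show "\<exists>d\<in>D. \<exists>e'. (\<forall>w. w \<notin> set vs \<longrightarrow> e' w = (e(v := d)) w) \<and>
      (\<forall>w\<in>set vs. e' w \<in> D) \<and> sat D I e' \<phi>"
      by (auto intro!: bexI[where x = "_ v"])
  qed
  finally show ?case .
qed

lemma sat_bigAnd: "sat D I e (bigAnd l) \<longleftrightarrow> (\<forall>\<phi>\<in>set l. sat D I e \<phi>)"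
  by (induction l) auto

lemma fv_bigAnd: "fv (bigAnd l) = \<Union>(fv ` set l)"
  by (induction l) auto

lemma preds_bigAnd: "preds (bigAnd l) = \<Union>(preds ` set l)"
  by (induction l) auto

lemma fv_exs: "fv (exs vs \<phi>) = fv \<phi> - set vs"
  by (induction vs) (auto simp: exs_def)

lemma preds_exs: "preds (exs vs \<phi>) = preds \<phi>"
  by (induction vs) (auto simp: exs_def)

lemma fv_exists_ge: "fv (exists_ge k) = {}"
proof -
  have "fv (bigAnd [Neg (Eq a b). a \<leftarrow> vs, b \<leftarrow> vs, a < b]) \<subseteq> set vs"
    "fv (bigAnd [Atom (U j) a. a \<leftarrow> vs, j \<leftarrow> js]) \<subseteq> set vs" for vs js
    by (auto simp: fv_bigAnd)
  then show ?thesis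
    unfolding exists_ge_def Let_def fv_exs fv.simps by blast
qed

lemma preds_exists_ge: "preds (exists_ge k) \<subseteq> range U"
  by (auto simp: exists_ge_def preds_exs preds_bigAnd)

definition U_count_ge :: "nat set \<Rightarrow> (psym \<Rightarrow> nat set) \<Rightarrow> nat \<Rightarrow> bool" where
  "U_count_ge D I k \<longleftrightarrow> (\<exists>S\<subseteq>D. finite S \<and> card S = k \<and> (\<forall>x\<in>S. \<forall>j\<le>k. x \<in> I (U j)))"

lemma sat_distinct_conj:
  "sat D I e (bigAnd [Neg (Eq a b). a \<leftarrow> vs, b \<leftarrow> vs, a < b]) \<longleftrightarrow>
     (\<forall>a\<in>set vs. \<forall>b\<in>set vs. a < b \<longrightarrow> e a \<noteq> e b)"
  unfolding sat_bigAnd by (auto simp: set_concat)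

lemma sat_U_conj:
  "sat D I e (bigAnd [Atom (U j) a. a \<leftarrow> vs, j \<leftarrow> js]) \<longleftrightarrow> (\<forall>a\<in>set vs. \<forall>j\<in>set js. e a \<in> I (U j))"
  unfolding sat_bigAnd by (auto simp: set_concat)

lemma sat_exists_ge: "sat D I e (exists_ge k) \<longleftrightarrow> U_count_ge D I k"
proof -
  have "sat D I e (exists_ge k) \<longleftrightarrow>
      (\<exists>e'. (\<forall>w. w \<notin> {1..k} \<longrightarrow> e' w = e w) \<and> (\<forall>w\<in>{1..k}. e' w \<in> D) \<and>
        (\<forall>a\<in>{1..k}. \<forall>b\<in>{1..k}. a < b \<longrightarrow> e' a \<noteq> e' b) \<and> (\<forall>a\<in>{1..k}. \<forall>j\<le>k. e' a \<in> I (U j)))"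
    unfolding exists_ge_def Let_def sat_exs sat.simps sat_distinct_conj sat_U_conj
    by (simp only: set_upt) (auto simp: less_Suc_eq_le)
  also have "\<dots> \<longleftrightarrow> U_count_ge D I k"
  proof
    assume "\<exists>e'. (\<forall>w. w \<notin> {1..k} \<longrightarrow> e' w = e w) \<and> (\<forall>w\<in>{1..k}. e' w \<in> D) \<and>
        (\<forall>a\<in>{1..k}. \<forall>b\<in>{1..k}. a < b \<longrightarrow> e' a \<noteq> e' b) \<and> (\<forall>a\<in>{1..k}. \<forall>j\<le>k. e' a \<in> I (U j))"
    then obtain e' where e': "\<forall>w\<in>{1..k}. e' w \<in> D" "\<forall>a\<in>{1..k}. \<forall>j\<le>k. e' a \<in> I (U j)"
        "\<forall>a\<in>{1..k}. \<forall>b\<in>{1..k}. a < b \<longrightarrow> e' a \<noteq> e' b"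
      by blast
    then have "inj_on e' {1..k}"
      by (intro inj_onI) (metis linorder_neqE_nat)
    then show "U_count_ge D I k"
      unfolding U_count_ge_def using e'(1,2) by (intro exI[of _ "e' ` {1..k}"]) (auto simp: card_image)
  next
    assume "U_count_ge D I k"
    then obtain S where S: "S \<subseteq> D" "finite S" "card S = k" "\<forall>x\<in>S. \<forall>j\<le>k. x \<in> I (U j)"
      unfolding U_count_ge_def by blast
    obtain g where g: "bij_betw g {1..k} S"
      using ex_bij_betw_nat_finite_1[OF S(2)] S(3) by auto
    let ?e' = "\<lambda>w. if w \<in> {1..k} then g w else e w"
    have "\<forall>a\<in>{1..k}. \<forall>b\<in>{1..k}. a < b \<longrightarrow> ?e' a \<noteq> ?e' b"
      using bij_betw_imp_inj_on[OF g] by (auto dest: inj_onD)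
    moreover have "\<forall>w\<in>{1..k}. ?e' w \<in> S"
      using g by (auto simp: bij_betw_def)
    ultimately show "\<exists>e'. (\<forall>w. w \<notin> {1..k} \<longrightarrow> e' w = e w) \<and> (\<forall>w\<in>{1..k}. e' w \<in> D) \<and>
        (\<forall>a\<in>{1..k}. \<forall>b\<in>{1..k}. a < b \<longrightarrow> e' a \<noteq> e' b) \<and> (\<forall>a\<in>{1..k}. \<forall>j\<le>k. e' a \<in> I (U j))"
      using S(1,4) by (intro exI[of _ ?e']) auto
  qed
  finally show ?thesis .
qed

lemma holds_sentence_iff: "fv \<sigma> = {} \<Longrightarrow> d \<in> D \<Longrightarrow> holds D I \<sigma> \<longleftrightarrow> sat D I (\<lambda>_. d) \<sigma>"
  unfolding holds_def by (metis (mono_tags) sat_fv_cong empty_iff image_subset_iff)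

lemma holds_inj_image:
  assumes "inj_on h D" "D \<noteq> {}" "\<forall>R. \<forall>x\<in>D. x \<in> I R \<longleftrightarrow> h x \<in> I' R" "fv \<sigma> = {}"
  shows "holds D I \<sigma> \<longleftrightarrow> holds (h ` D) I' \<sigma>"
proof -
  obtain d where "d \<in> D" using assms(2) by blast
  have "sat D I (\<lambda>_. d) \<sigma> \<longleftrightarrow> sat (h ` D) I' (h \<circ> (\<lambda>_. d)) \<sigma>"
    using sat_inj_image[OF assms(1)] assms(3) \<open>d \<in> D\<close> by auto
  then show ?thesis
    using holds_sentence_iff[OF assms(4), of d D] holds_sentence_iff[OF assms(4), of "h d" "h ` D"]
      \<open>d \<in> D\<close> by (simp add: comp_def)
qed

lemma infinite_same_type:
  assumes "infinite X" "finite A"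
  shows "\<exists>d\<^sub>0\<in>X. infinite {d\<in>X. \<forall>R\<in>A. d \<in> I R \<longleftrightarrow> d\<^sub>0 \<in> I R}"
proof -
  have "finite ((\<lambda>d. {R\<in>A. d \<in> I R}) ` X)"
    using assms(2) by (rule finite_subset[rotated, OF finite_Pow_iff[THEN iffD2]]) auto
  then obtain d\<^sub>0 where "d\<^sub>0 \<in> X" "infinite {d\<in>X. {R\<in>A. d \<in> I R} = {R\<in>A. d\<^sub>0 \<in> I R}}"
    using pigeonhole_infinite[OF assms(1)] by blast
  moreover have "{d\<in>X. {R\<in>A. d \<in> I R} = {R\<in>A. d\<^sub>0 \<in> I R}} = {d\<in>X. \<forall>R\<in>A. d \<in> I R \<longleftrightarrow> d\<^sub>0 \<in> I R}"
    by blast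
  ultimately show ?thesis by auto
qed

section \<open>The trees and the theory \<open>T\<^sub>\<tau>\<close>\<close>

definition child_ord :: "(ordn \<Rightarrow> nat \<Rightarrow> ordn) \<Rightarrow> ordn \<Rightarrow> nat \<Rightarrow> ordn" where
  "child_ord f \<alpha> i = (if is_succ \<alpha> then opred \<alpha> else f \<alpha> i)"

text \<open>The subtree of \<open>\<tau>\<^sub>\<alpha>\<close> at the node \<open>s\<close> is \<open>\<tau>\<^sub>\<beta>\<close> for \<open>\<beta> = node_ord f \<alpha> s\<close>
  (\<open>in_tau_append\<close>).\<close>
fun node_ord :: "(ordn \<Rightarrow> nat \<Rightarrow> ordn) \<Rightarrow> ordn \<Rightarrow> nat list \<Rightarrow> ordn" where
  "node_ord f \<alpha> [] = \<alpha>"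
| "node_ord f \<alpha> (i # s) = node_ord f (child_ord f \<alpha> i) s"

lemma in_tau_Cons_iff: "in_tau f \<alpha> (i # s) \<longleftrightarrow> \<alpha> \<noteq> OZ \<and> in_tau f (child_ord f \<alpha> i) s"
proof
  assume "in_tau f \<alpha> (i # s)"
  then show "\<alpha> \<noteq> OZ \<and> in_tau f (child_ord f \<alpha> i) s"
    by cases (auto simp: child_ord_def is_succ_def is_limit_def)
next
  assume *: "\<alpha> \<noteq> OZ \<and> in_tau f (child_ord f \<alpha> i) s"
  show "in_tau f \<alpha> (i # s)"
  proof (cases "is_succ \<alpha>")
    case True
    then show ?thesis using * by (simp add: child_ord_def in_tau.succ)
  next
    case False
    then have "is_limit \<alpha>" using * by (simp add: is_succ_def is_limit_def)
    then show ?thesis using * False by (simp add: child_ord_def in_tau.lim)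
  qed
qed

lemma in_tau_append: "in_tau f \<alpha> (s @ t) \<longleftrightarrow> in_tau f \<alpha> s \<and> in_tau f (node_ord f \<alpha> s) t"
proof (induction s arbitrary: \<alpha>)
  case Nil
  then show ?case by (simp add: in_tau.root)
next
  case (Cons i s)
  then show ?case by (simp add: in_tau_Cons_iff)
qed

lemma in_tau_singleton_iff: "in_tau f \<alpha> [i] \<longleftrightarrow> \<alpha> \<noteq> OZ"
  by (simp add: in_tau_Cons_iff in_tau.root)

lemma in_tau_snoc_iff: "in_tau f \<alpha> (s @ [i]) \<longleftrightarrow> in_tau f \<alpha> s \<and> node_ord f \<alpha> s \<noteq> OZ"
  by (simp add: in_tau_append in_tau_singleton_iff)

lemma node_ord_snoc: "node_ord f \<alpha> (s @ [i]) = child_ord f (node_ord f \<alpha> s) i"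
  by (induction s arbitrary: \<alpha>) auto

lemma rank0_tau_iff: "rank0 (tau f \<alpha>) s \<longleftrightarrow> in_tau f \<alpha> s \<and> node_ord f \<alpha> s = OZ"
  by (auto simp: rank0_def tau_def in_tau_snoc_iff)

definition T_model :: "nat list set \<Rightarrow> nat set \<Rightarrow> (psym \<Rightarrow> nat set) \<Rightarrow> bool" where
  "T_model t D I \<longleftrightarrow>
     (\<forall>s i. s @ [i] \<in> t \<and> s \<noteq> [] \<and> D \<inter> I (P (s @ [i])) = {} \<longrightarrow> D \<inter> I (P s) \<subseteq> I (U i)) \<and>
     (\<forall>s i. rank0 t s \<and> s \<noteq> [] \<longrightarrow> D \<inter> I (P s) \<subseteq> I (U i)) \<and>
     (\<forall>k. U_count_ge D I k)"

lemma holds_T_tau_iff: "D \<noteq> {} \<Longrightarrow> (\<forall>\<sigma>\<in>T_tau t. holds D I \<sigma>) \<longleftrightarrow> T_model t D I"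
proof -
  assume "D \<noteq> {}"
  then obtain d where d: "d \<in> D" by blast
  have ax1: "holds D I (Imp (Neg (Ex 0 (Atom A 0))) (All 0 (Imp (Atom B 0) (Atom C 0))))
      \<longleftrightarrow> (D \<inter> I A = {} \<longrightarrow> D \<inter> I B \<subseteq> I C)" for A B C
    using d by (subst holds_sentence_iff) auto
  have ax2: "holds D I (All 0 (Imp (Atom B 0) (Atom C 0))) \<longleftrightarrow> D \<inter> I B \<subseteq> I C" for B C
    using d by (subst holds_sentence_iff) auto
  have ax3: "holds D I (exists_ge k) \<longleftrightarrow> U_count_ge D I k" for k
    using d by (simp add: holds_sentence_iff fv_exists_ge sat_exists_ge)
  have "(\<forall>\<sigma>\<in>T_tau t. holds D I \<sigma>) \<longleftrightarrow>
     (\<forall>s i. s @ [i] \<in> t \<and> s \<noteq> [] \<longrightarrow>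
        holds D I (Imp (Neg (Ex 0 (Atom (P (s @ [i])) 0))) (All 0 (Imp (Atom (P s) 0) (Atom (U i) 0))))) \<and>
     (\<forall>s i. rank0 t s \<and> s \<noteq> [] \<longrightarrow> holds D I (All 0 (Imp (Atom (P s) 0) (Atom (U i) 0)))) \<and>
     (\<forall>k. holds D I (exists_ge k))"
    unfolding T_tau_def by blast
  then show ?thesis
    unfolding ax1 ax2 ax3 T_model_def by blast
qed

lemma sentence_if_in_T_tau:
  assumes "\<And>s i. s @ [i] \<in> t \<Longrightarrow> s \<in> t" "\<sigma> \<in> T_tau t"
  shows "sentence (lang_tau t) \<sigma>"
proof -
  have "preds (exists_ge k) \<subseteq> lang_tau t" for k
    using preds_exists_ge[of k] by (auto simp: lang_tau_def)
  then show ?thesis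
    using assms fv_exists_ge
    by (auto simp: T_tau_def sentence_def in_lang_def lang_tau_def rank0_def)
qed

lemma fv_T_tau: "\<sigma> \<in> T_tau t \<Longrightarrow> fv \<sigma> = {}"
  by (auto simp: T_tau_def fv_exists_ge)

lemma T_model_inj_image:
  assumes "inj_on h D" "D \<noteq> {}" "T_model t D I"
  shows "T_model t (h ` D) (\<lambda>R. h ` (I R \<inter> D))"
proof -
  have iso: "\<forall>R. \<forall>x\<in>D. x \<in> I R \<longleftrightarrow> h x \<in> h ` (I R \<inter> D)"
    using assms(1) by (auto simp: inj_on_image_mem_iff)
  have "holds D I \<sigma> \<longleftrightarrow> holds (h ` D) (\<lambda>R. h ` (I R \<inter> D)) \<sigma>" if "\<sigma> \<in> T_tau t" for \<sigma>
    by (rule holds_inj_image[OF assms(1,2) iso fv_T_tau[OF that]])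
  then show ?thesis
    using holds_T_tau_iff assms(2,3) by (metis image_is_empty)
qed

lemma T_model_clear_P:
  "T_model t D I \<Longrightarrow> T_model t D (\<lambda>R. case R of P _ \<Rightarrow> {} | U j \<Rightarrow> I (U j))"
  by (simp add: T_model_def U_count_ge_def)

lemma infinite_common_U:
  assumes "\<forall>k. U_count_ge D I k" "finite J"
  shows "infinite {d\<in>D. \<forall>j\<in>J. d \<in> I (U j)}"
proof
  assume fin: "finite {d\<in>D. \<forall>j\<in>J. d \<in> I (U j)}"
  obtain K where K: "\<forall>j\<in>J. j \<le> K"
    using assms(2) finite_nat_set_iff_bounded_le by blast
  let ?n = "card {d\<in>D. \<forall>j\<in>J. d \<in> I (U j)} + 1 + K"
  have "U_count_ge D I ?n"
    using assms(1) by blast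
  then obtain S where S: "S \<subseteq> D" "finite S" "card S = ?n" "\<forall>x\<in>S. \<forall>j\<le>?n. x \<in> I (U j)"
    unfolding U_count_ge_def by blast
  have "S \<subseteq> {d\<in>D. \<forall>j\<in>J. d \<in> I (U j)}"
    using S(1,4) K by fastforce
  then have "card S \<le> card {d\<in>D. \<forall>j\<in>J. d \<in> I (U j)}"
    using fin by (rule card_mono[rotated])
  then show False
    using S(3) by simp
qed

lemma exists_shared_type_in_U:
  assumes "\<forall>k. U_count_ge D I k" "finite A"
  shows "\<exists>d\<^sub>0\<in>D. (\<forall>j. U j \<in> A \<longrightarrow> d\<^sub>0 \<in> I (U j)) \<and> infinite {d\<in>D. \<forall>R\<in>A. d \<in> I R \<longleftrightarrow> d\<^sub>0 \<in> I R}"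
proof -
  define X where "X = {d\<in>D. \<forall>j\<in>U -` A. d \<in> I (U j)}"
  have "infinite X"
    unfolding X_def using assms(1) finite_vimageI[OF assms(2), of U]
    by (intro infinite_common_U) (auto simp: inj_def)
  then obtain d\<^sub>0 where "d\<^sub>0 \<in> X" "infinite {d\<in>X. \<forall>R\<in>A. d \<in> I R \<longleftrightarrow> d\<^sub>0 \<in> I R}"
    using infinite_same_type[OF _ assms(2), of X I] by blast
  moreover have "{d\<in>X. \<forall>R\<in>A. d \<in> I R \<longleftrightarrow> d\<^sub>0 \<in> I R} \<subseteq> {d\<in>D. \<forall>R\<in>A. d \<in> I R \<longleftrightarrow> d\<^sub>0 \<in> I R}"
    by (auto simp: X_def)
  ultimately have "infinite {d\<in>D. \<forall>R\<in>A. d \<in> I R \<longleftrightarrow> d\<^sub>0 \<in> I R}"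
    using infinite_super by blast
  then show ?thesis
    using \<open>d\<^sub>0 \<in> X\<close> by (intro bexI[of _ d\<^sub>0]) (auto simp: X_def)
qed

definition empty_P :: "nat list \<Rightarrow> fm" where
  "empty_P s = Neg (exs [0] (Atom (P s) 0))"

lemma holds_empty_P_iff: "D \<noteq> {} \<Longrightarrow> holds D I (empty_P s) \<longleftrightarrow> D \<inter> I (P s) = {}"
proof -
  assume "D \<noteq> {}"
  then obtain d where "d \<in> D" by blast
  then show ?thesis
    by (subst holds_sentence_iff) (auto simp: empty_P_def exs_def)
qed

locale fundamental_sequences =
  fixes W :: "ordn \<Rightarrow> bool" and f :: "ordn \<Rightarrow> nat \<Rightarrow> ordn"
  assumes W_nf: "W \<alpha> \<Longrightarrow> nf \<alpha>"
    and W_downward: "W \<alpha> \<Longrightarrow> nf \<beta> \<Longrightarrow> \<beta> < \<alpha> \<Longrightarrow> W \<beta>"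
    and fs_nf: "W l \<Longrightarrow> is_limit l \<Longrightarrow> nf (f l i)"
    and fs_less: "W l \<Longrightarrow> is_limit l \<Longrightarrow> f l i < l"
    and fs_less_Suc: "W l \<Longrightarrow> is_limit l \<Longrightarrow> f l i < f l (Suc i)"
    and fs_cofinal: "W l \<Longrightarrow> is_limit l \<Longrightarrow> nf \<beta> \<Longrightarrow> \<beta> < l \<Longrightarrow> \<exists>i. \<beta> \<le> f l i"
begin

lemma W_child_ord:
  assumes "W \<alpha>" "\<alpha> \<noteq> OZ"
  shows "W (child_ord f \<alpha> i) \<and> child_ord f \<alpha> i < \<alpha>"
proof (cases "is_succ \<alpha>")
  case True
  have "nf (opred \<alpha>)" "opred \<alpha> < \<alpha>"
    using nf_opred[OF W_nf[OF assms(1)]] opred_less[OF assms(2)] by blast+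
  then show ?thesis
    using True W_downward[OF assms(1)] by (simp add: child_ord_def)
next
  case False
  then have "is_limit \<alpha>"
    using assms(2) by (simp add: is_succ_def is_limit_def)
  then have "nf (f \<alpha> i)" "f \<alpha> i < \<alpha>"
    using fs_nf fs_less assms(1) by blast+
  then show ?thesis
    using False W_downward[OF assms(1)] by (simp add: child_ord_def)
qed

lemma W_node_ord: "W \<alpha> \<Longrightarrow> in_tau f \<alpha> s \<Longrightarrow> W (node_ord f \<alpha> s) \<and> (s \<noteq> [] \<longrightarrow> node_ord f \<alpha> s < \<alpha>)"
proof (induction s arbitrary: \<alpha>)
  case (Cons i s)
  then have "W (child_ord f \<alpha> i)" "child_ord f \<alpha> i < \<alpha>" "in_tau f (child_ord f \<alpha> i) s"
    using W_child_ord by (auto simp: in_tau_Cons_iff)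
  then show ?case
    using Cons.IH[of "child_ord f \<alpha> i"] by (cases "s = []") (auto intro: less_trans)
qed simp

lemma node_ord_snoc_less:
  "W \<alpha> \<Longrightarrow> in_tau f \<alpha> (s @ [i]) \<Longrightarrow> node_ord f \<alpha> (s @ [i]) < node_ord f \<alpha> s"
  using W_child_ord W_node_ord by (simp add: in_tau_snoc_iff node_ord_snoc)

lemma fs_mono: "W l \<Longrightarrow> is_limit l \<Longrightarrow> i \<le> j \<Longrightarrow> f l i \<le> f l j"
proof (induction j)
  case (Suc j)
  show ?case
  proof (cases "i = Suc j")
    case False
    then have "f l i \<le> f l j"
      using Suc by simp
    also have "\<dots> < f l (Suc j)"
      using fs_less_Suc Suc.prems by blast
    finally show ?thesis by simp
  qed simp
qed simp

lemma eventually_le_child_ord: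
  assumes "W \<alpha>" "nf \<beta>" "\<beta> < \<alpha>"
  shows "\<forall>\<^sub>F i in sequentially. \<beta> \<le> child_ord f \<alpha> i"
proof (cases "is_succ \<alpha>")
  case True
  then show ?thesis
    using less_succ_imp_le_opred assms(3) by (simp add: child_ord_def)
next
  case False
  then have "is_limit \<alpha>"
    using assms(3) by (auto simp: is_succ_def is_limit_def)
  then obtain i where "\<beta> \<le> f \<alpha> i"
    using fs_cofinal assms by blast
  then have "\<beta> \<le> child_ord f \<alpha> j" if "i \<le> j" for j
    using fs_mono[OF assms(1) \<open>is_limit \<alpha>\<close> that] False by (simp add: child_ord_def)
  then show ?thesis
    by (auto simp: eventually_sequentially)
qed

end

section \<open>The rank of \<open>T\<^sub>\<tau>\<close>\<close>

locale tau_rank = fundamental_sequences +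
  fixes \<alpha> :: ordn
  assumes W_\<alpha>: "W \<alpha>"
begin

abbreviation "\<tau> \<equiv> tau f \<alpha>"
abbreviation "L\<^sub>\<tau> \<equiv> lang_tau \<tau>"
abbreviation "T\<^sub>\<tau> \<equiv> T_tau \<tau>"
abbreviation "stage \<equiv> iter L\<^sub>\<tau> [0] p_U T\<^sub>\<tau>"
abbreviation "lab \<equiv> node_ord f \<alpha>"
abbreviation "node s \<equiv> in_tau f \<alpha> s \<and> s \<noteq> []"

lemma P_in_lang_iff: "P s \<in> L\<^sub>\<tau> \<longleftrightarrow> node s"
  by (auto simp: lang_tau_def tau_def)

lemma W_lab: "in_tau f \<alpha> s \<Longrightarrow> W (lab s)"
  using W_node_ord W_\<alpha> by blast

lemma lab_less: "node s \<Longrightarrow> lab s < \<alpha>"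
  using W_node_ord W_\<alpha> by blast

lemma T_model_tau_iff:
  "T_model \<tau> D I \<longleftrightarrow>
     (\<forall>s i. in_tau f \<alpha> (s @ [i]) \<and> s \<noteq> [] \<and> D \<inter> I (P (s @ [i])) = {} \<longrightarrow> D \<inter> I (P s) \<subseteq> I (U i)) \<and>
     (\<forall>s i. node s \<and> lab s = OZ \<longrightarrow> D \<inter> I (P s) \<subseteq> I (U i)) \<and>
     (\<forall>k. U_count_ge D I k)"
  unfolding T_model_def rank0_tau_iff unfolding tau_def mem_Collect_eq by blast

lemma sentence_T_tau: "\<sigma> \<in> T\<^sub>\<tau> \<Longrightarrow> sentence L\<^sub>\<tau> \<sigma>"
  by (rule sentence_if_in_T_tau) (auto simp: tau_def in_tau_snoc_iff)

lemma T_tau_subset_stage: "nf \<gamma> \<Longrightarrow> T\<^sub>\<tau> \<subseteq> stage \<gamma>"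
  using sentences_subset_fo_closure[of T\<^sub>\<tau> L\<^sub>\<tau> "{}"] fo_closure_subset_iter sentence_T_tau
  by fastforce

text \<open>The models \<open>K_model (\<lambda>x. x < \<gamma>)\<close> are exactly the models of the \<open>\<gamma>\<close>-th stage
  (\<open>K_model_holds_stage\<close>, \<open>K_model_if_holds_stage\<close>).\<close>
definition K_model :: "(ordn \<Rightarrow> bool) \<Rightarrow> nat set \<Rightarrow> (psym \<Rightarrow> nat set) \<Rightarrow> bool" where
  "K_model Z D I \<longleftrightarrow> D \<noteq> {} \<and> T_model \<tau> D I \<and> (\<forall>s. node s \<and> Z (lab s) \<longrightarrow> D \<inter> I (P s) = {})"

lemma K_model_mono: "K_model Z' D I \<Longrightarrow> (\<And>x. Z x \<Longrightarrow> Z' x) \<Longrightarrow> K_model Z D I"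
  unfolding K_model_def by blast

lemma K_model_inj_image:
  assumes "inj_on h D" "K_model Z D I"
  shows "K_model Z (h ` D) (\<lambda>R. h ` (I R \<inter> D))"
  using assms T_model_inj_image unfolding K_model_def by blast

context
  fixes \<beta> :: ordn and D :: "nat set" and I :: "psym \<Rightarrow> nat set" and A :: "psym set"
    and a c d\<^sub>0 m :: nat
  assumes K: "K_model (\<lambda>x. x \<le> \<beta>) D I"
    and c_new: "c \<notin> D" and a_in: "a \<in> D" and d\<^sub>0_in: "d\<^sub>0 \<in> D"
    and U_m_fresh: "U m \<notin> A"
    and child_fresh: "\<And>s. P s \<in> A \<Longrightarrow> a \<in> I (P s) \<Longrightarrow> P (s @ [m]) \<notin> A \<and> \<beta> \<le> lab (s @ [m])"
begin

text \<open>For every node \<open>s\<close> in \<open>A\<close> containing \<open>a\<close>, \<open>c\<close> also enters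
  the fresh child \<open>s @ [m]\<close>: this keeps the axiom of \<open>T\<^sub>\<tau>\<close> for \<open>s\<close> true although
  \<open>a \<notin> U m\<close>.\<close>
definition perturbed :: "psym \<Rightarrow> nat set" where
  "perturbed R = (case R of
      U j \<Rightarrow> (if j = m then I (U j) \<inter> D - {a} else I (U j) \<inter> D) \<union> {c}
    | P t \<Rightarrow>
        if P t \<in> A then I (P t) \<inter> D \<union> (if d\<^sub>0 \<in> I (P t) then {c} else {})
        else I (P t) \<inter> D - {a} \<union>
          (if a \<in> I (P t) \<or> (\<exists>s. P s \<in> A \<and> a \<in> I (P s) \<and> t = s @ [m]) then {c} else {}))"

lemma perturbed_agrees: "R \<in> A \<Longrightarrow> x \<in> D \<Longrightarrow> x \<in> perturbed R \<longleftrightarrow> x \<in> I R"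
  using U_m_fresh c_new by (cases R) (auto simp: perturbed_def)

lemma c_in_perturbed_iff:
  "R \<in> A \<Longrightarrow> (\<And>j. U j \<in> A \<Longrightarrow> d\<^sub>0 \<in> I (U j)) \<Longrightarrow> c \<in> perturbed R \<longleftrightarrow> d\<^sub>0 \<in> I R"
  using c_new by (cases R) (auto simp: perturbed_def)

lemma a_notin_perturbed_U: "a \<notin> perturbed (U m)"
  using a_in c_new by (auto simp: perturbed_def)

lemma perturbed_kills:
  assumes "node t" "lab t < \<beta>"
  shows "insert c D \<inter> perturbed (P t) = {}"
proof -
  have empty: "D \<inter> I (P t) = {}"
    using K assms by (simp add: K_model_def)
  have "\<beta> \<le> lab t" if "t = s @ [m]" "P s \<in> A" "a \<in> I (P s)" for s
    using child_fresh that by blast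
  then have "c \<notin> perturbed (P t)"
    using empty a_in d\<^sub>0_in c_new assms(2) by (auto simp: perturbed_def)
  then show ?thesis
    using empty by (auto simp: perturbed_def)
qed

lemma perturbed_child_axiom:
  assumes "in_tau f \<alpha> (t @ [i])" "t \<noteq> []" "insert c D \<inter> perturbed (P (t @ [i])) = {}"
  shows "insert c D \<inter> perturbed (P t) \<subseteq> perturbed (U i)"
proof
  fix x
  assume x: "x \<in> insert c D \<inter> perturbed (P t)"
  have "D \<inter> I (P (t @ [i])) = {}"
    using assms(3) a_in by (auto simp: perturbed_def split: if_splits)
  then have parent: "D \<inter> I (P t) \<subseteq> I (U i)"
    using K assms(1,2) by (simp add: K_model_def T_model_tau_iff)
  show "x \<in> perturbed (U i)"
  proof (cases "x = c")
    case False
    then have "x \<in> D" "x \<in> I (P t)" "P t \<notin> A \<Longrightarrow> x \<noteq> a"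
      using x by (auto simp: perturbed_def split: if_splits)
    moreover have "\<not> (i = m \<and> x = a \<and> P t \<in> A \<and> a \<in> I (P t))"
    proof
      assume "i = m \<and> x = a \<and> P t \<in> A \<and> a \<in> I (P t)"
      then have "c \<in> perturbed (P (t @ [i]))"
        using child_fresh by (auto simp: perturbed_def)
      then show False
        using assms(3) by blast
    qed
    ultimately show ?thesis
      using parent by (auto simp: perturbed_def)
  qed (simp add: perturbed_def)
qed

lemma perturbed_U_count: "U_count_ge (insert c D) perturbed k"
proof -
  have "U_count_ge D I k"
    using K by (simp add: K_model_def T_model_tau_iff)
  then obtain S where S: "S \<subseteq> D" "finite S" "card S = k" "\<forall>x\<in>S. \<forall>j\<le>k. x \<in> I (U j)"
    unfolding U_count_ge_def by blast
  have "k \<le> card (insert c (S - {a}))"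
    using S(2,3) c_new S(1) by (cases "a \<in> S") (auto simp: card_insert_if card_Diff1_le)
  then obtain S' where S': "S' \<subseteq> insert c (S - {a})" "card S' = k" "finite S'"
    by (meson obtain_subset_with_card_n)
  have "\<forall>x\<in>S'. \<forall>j\<le>k. x \<in> perturbed (U j)"
    using S'(1) S(1,4) by (auto simp: perturbed_def)
  then show ?thesis
    unfolding U_count_ge_def using S' S(1) by (intro exI[of _ S']) auto
qed

lemma K_model_perturbed: "K_model (\<lambda>x. x < \<beta>) (insert c D) perturbed"
  unfolding K_model_def T_model_tau_iff
proof (intro conjI allI impI)
  fix t i
  assume "node t \<and> lab t = OZ"
  then have "D \<inter> I (P t) = {}"
    using K by (simp add: K_model_def)
  then show "insert c D \<inter> perturbed (P t) \<subseteq> perturbed (U i)"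
    by (auto simp: perturbed_def)
qed (use perturbed_kills perturbed_child_axiom perturbed_U_count in auto)

end

lemma exists_fresh_child_index:
  assumes "W \<beta>" "finite N" "\<And>s. s \<in> N \<Longrightarrow> in_tau f \<alpha> s \<and> \<beta> < lab s" "finite B"
  shows "\<exists>m. m \<notin> B \<and> (\<forall>s\<in>N. \<beta> \<le> lab (s @ [m]))"
proof -
  have "\<forall>\<^sub>F m in sequentially. \<beta> \<le> lab (s @ [m])" if "s \<in> N" for s
    using eventually_le_child_ord[OF W_lab W_nf[OF assms(1)]] assms(3)[OF that]
    by (simp add: node_ord_snoc)
  then have "\<forall>\<^sub>F m in sequentially. \<forall>s\<in>N. \<beta> \<le> lab (s @ [m])"
    using assms(2) by (simp add: eventually_ball_finite)
  moreover obtain b where "\<forall>m\<in>B. m < b"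
    using assms(4) finite_nat_set_iff_bounded by blast
  then have "\<forall>\<^sub>F m in sequentially. m \<notin> B"
    unfolding eventually_sequentially by (metis leD)
  ultimately have "\<forall>\<^sub>F m in sequentially. m \<notin> B \<and> (\<forall>s\<in>N. \<beta> \<le> lab (s @ [m]))"
    by eventually_elim blast
  then show ?thesis
    using eventually_happens'[OF sequentially_bot] by blast
qed

lemma exists_fresh_child:
  assumes "W \<beta>" "K_model (\<lambda>x. x \<le> \<beta>) D I" "finite A" "A \<subseteq> L\<^sub>\<tau>" "a \<in> D"
  shows "\<exists>m. U m \<notin> A \<and> (\<forall>s. P s \<in> A \<and> a \<in> I (P s) \<longrightarrow> P (s @ [m]) \<notin> A \<and> \<beta> \<le> lab (s @ [m]))"
proof -
  have fin_vimage: "finite (g -` A)" if "inj g" for g :: "'x \<Rightarrow> psym"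
    using assms(3) that by (rule finite_vimageI)
  define N where "N = {s. P s \<in> A \<and> a \<in> I (P s)}"
  have "finite N"
    using fin_vimage[of P] by (rule finite_subset[rotated]) (auto simp: N_def inj_def)
  have N_nodes: "in_tau f \<alpha> s \<and> \<beta> < lab s" if "s \<in> N" for s
  proof -
    have "node s"
      using that assms(4) P_in_lang_iff by (auto simp: N_def)
    moreover have "D \<inter> I (P s) \<noteq> {}"
      using that assms(5) by (auto simp: N_def)
    ultimately show ?thesis
      using assms(2) by (auto simp: K_model_def not_le)
  qed
  define B where "B = U -` A \<union> (\<Union>s\<in>N. (\<lambda>m. P (s @ [m])) -` A)"
  have "finite ((\<lambda>m. P (s @ [m])) -` A)" for s
    by (rule fin_vimage) (simp add: inj_def)
  then have "finite B"
    unfolding B_def using \<open>finite N\<close> fin_vimage[of U] by (simp add: inj_def)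
  then obtain m where "m \<notin> B" "\<forall>s\<in>N. \<beta> \<le> lab (s @ [m])"
    using exists_fresh_child_index[OF assms(1) \<open>finite N\<close> N_nodes] by blast
  then show ?thesis
    by (intro exI[of _ m]) (auto simp: B_def N_def)
qed

lemma perturbation_new_element:
  assumes "W \<beta>" "K_model (\<lambda>x. x \<le> \<beta>) D I" "c \<notin> D" "in_lang L\<^sub>\<tau> \<phi>" "range e \<subseteq> D"
    and "sat D I e \<phi>"
  shows "\<exists>I' m. K_model (\<lambda>x. x < \<beta>) (insert c D) I' \<and> sat (insert c D) I' e \<phi> \<and> e 0 \<notin> I' (U m)"
proof -
  define A where "A = preds \<phi>"
  define a where "a = e 0"
  have "finite A" "A \<subseteq> L\<^sub>\<tau>" "a \<in> D"
    using finite_preds assms(4,5) by (auto simp: A_def a_def in_lang_def)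
  then obtain m where "U m \<notin> A"
    and m: "\<forall>s. P s \<in> A \<and> a \<in> I (P s) \<longrightarrow> P (s @ [m]) \<notin> A \<and> \<beta> \<le> lab (s @ [m])"
    using exists_fresh_child[OF assms(1,2)] by blast
  have "\<forall>k. U_count_ge D I k"
    using assms(2) by (simp add: K_model_def T_model_tau_iff)
  then obtain d\<^sub>0 where "d\<^sub>0 \<in> D" and d\<^sub>0_U: "\<And>j. U j \<in> A \<Longrightarrow> d\<^sub>0 \<in> I (U j)"
    and twins: "infinite {d\<in>D. \<forall>R\<in>A. d \<in> I R \<longleftrightarrow> d\<^sub>0 \<in> I R}"
    using exists_shared_type_in_U[OF _ \<open>finite A\<close>] by blast
  let ?I' = "perturbed D I A a c d\<^sub>0 m"
  note ctx = assms(2,3) \<open>a \<in> D\<close> \<open>d\<^sub>0 \<in> D\<close> \<open>U m \<notin> A\<close> m[rule_format, OF conjI]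
  have "K_model (\<lambda>x. x < \<beta>) (insert c D) ?I'"
    by (rule K_model_perturbed[OF ctx])
  moreover have "sat (insert c D) ?I' e \<phi>"
  proof (rule sat_insert_indiscernible[THEN iffD2])
    show "\<forall>R\<in>A. \<forall>x\<in>D. x \<in> ?I' R \<longleftrightarrow> x \<in> I R"
      using perturbed_agrees[OF ctx] by blast
    have "{d\<in>D. \<forall>R\<in>A. d \<in> I R \<longleftrightarrow> c \<in> ?I' R} = {d\<in>D. \<forall>R\<in>A. d \<in> I R \<longleftrightarrow> d\<^sub>0 \<in> I R}"
      using c_in_perturbed_iff[OF ctx _ d\<^sub>0_U] by auto
    then show "infinite {d\<in>D. \<forall>R\<in>A. d \<in> I R \<longleftrightarrow> c \<in> ?I' R}"
      using twins by simp
  qed (use assms(3,5,6) in \<open>simp_all add: A_def\<close>)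
  moreover have "e 0 \<notin> ?I' (U m)"
    using a_notin_perturbed_U[OF ctx] by (simp add: a_def)
  ultimately show ?thesis
    by (intro exI[of _ ?I'] exI[of _ m] conjI)
qed

lemma perturbation:
  assumes "W \<beta>" "K_model (\<lambda>x. x \<le> \<beta>) D I" "in_lang L\<^sub>\<tau> \<phi>" "range e \<subseteq> D" "sat D I e \<phi>"
  shows "\<exists>D' I' e' m. K_model (\<lambda>x. x < \<beta>) D' I' \<and> range e' \<subseteq> D' \<and> sat D' I' e' \<phi> \<and> e' 0 \<notin> I' (U m)"
proof -
  \<comment> \<open>Domains are sets of naturals; doubling frees the element \<open>1\<close>.\<close>
  define h :: "nat \<Rightarrow> nat" where "h x = 2 * x" for x
  have "inj_on h D"
    by (simp add: h_def inj_on_def)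
  have "\<forall>R\<in>preds \<phi>. \<forall>x\<in>D. x \<in> I R \<longleftrightarrow> h x \<in> h ` (I R \<inter> D)"
    using \<open>inj_on h D\<close> by (auto simp: inj_on_image_mem_iff)
  then have "sat D I e \<phi> \<longleftrightarrow> sat (h ` D) (\<lambda>R. h ` (I R \<inter> D)) (h \<circ> e) \<phi>"
    by (rule sat_inj_image[OF \<open>inj_on h D\<close> _ assms(4)])
  then have "sat (h ` D) (\<lambda>R. h ` (I R \<inter> D)) (h \<circ> e) \<phi>"
    using assms(5) by (rule iffD1)
  moreover have "K_model (\<lambda>x. x \<le> \<beta>) (h ` D) (\<lambda>R. h ` (I R \<inter> D))"
    using K_model_inj_image[OF \<open>inj_on h D\<close> assms(2)] .
  moreover have "1 \<notin> h ` D" "range (h \<circ> e) \<subseteq> h ` D"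
    using assms(4) by (auto simp: h_def)
  ultimately obtain I' m where "K_model (\<lambda>x. x < \<beta>) (insert 1 (h ` D)) I'"
    "sat (insert 1 (h ` D)) I' (h \<circ> e) \<phi>" "(h \<circ> e) 0 \<notin> I' (U m)"
    using perturbation_new_element[OF assms(1) _ _ assms(3)] by blast
  moreover have "range (h \<circ> e) \<subseteq> insert 1 (h ` D)"
    using \<open>range (h \<circ> e) \<subseteq> h ` D\<close> by blast
  ultimately show ?thesis
    by blast
qed

lemma K_model_holds_pset:
  assumes "W \<beta>" "K_model (\<lambda>x. x \<le> \<beta>) D I"
    and sound: "\<And>D' I'. K_model (\<lambda>x. x < \<beta>) D' I' \<Longrightarrow> \<forall>\<sigma>\<in>stage \<beta>. holds D' I' \<sigma>"
    and "\<psi> \<in> pset L\<^sub>\<tau> [0] p_U (stage \<beta>)"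
  shows "holds D I \<psi>"
proof -
  obtain \<phi> where \<psi>: "\<psi> = Neg (Ex 0 \<phi>)" and "in_lang L\<^sub>\<tau> \<phi>"
    and isolated: "\<And>j. entails (stage \<beta>) (All 0 (Imp \<phi> (Atom (U j) 0)))"
    using assms(4) by (auto simp: pset_def p_U_def exs_def alls_def)
  show ?thesis
    unfolding holds_def
  proof (intro allI impI)
    fix e :: "nat \<Rightarrow> nat"
    assume "range e \<subseteq> D"
    show "sat D I e \<psi>"
      unfolding \<psi> sat.simps(4)
    proof
      assume "sat D I e (Ex 0 \<phi>)"
      then obtain d where "d \<in> D" "sat D I (e(0 := d)) \<phi>"
        by auto
      moreover have "range (e(0 := d)) \<subseteq> D"
        using \<open>range e \<subseteq> D\<close> \<open>d \<in> D\<close> by auto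
      ultimately obtain D' I' e' m where K': "K_model (\<lambda>x. x < \<beta>) D' I'" and
        "range e' \<subseteq> D'" "sat D' I' e' \<phi>" "e' 0 \<notin> I' (U m)"
        using perturbation[OF assms(1,2) \<open>in_lang L\<^sub>\<tau> \<phi>\<close>] by blast
      moreover have "holds D' I' (All 0 (Imp \<phi> (Atom (U m) 0)))"
        using isolated[of m] sound[OF K'] K' unfolding entails_def K_model_def by blast
      ultimately have "\<forall>d\<in>D'. sat D' I' (e'(0 := d)) \<phi> \<longrightarrow> d \<in> I' (U m)"
        unfolding holds_def by simp
      moreover have "e' 0 \<in> D'"
        using \<open>range e' \<subseteq> D'\<close> by auto
      ultimately have "sat D' I' (e'(0 := e' 0)) \<phi> \<longrightarrow> e' 0 \<in> I' (U m)"
        by blast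
      then show False
        using \<open>sat D' I' e' \<phi>\<close> \<open>e' 0 \<notin> I' (U m)\<close> by simp
    qed
  qed
qed

lemma K_model_holds_stage:
  assumes "W \<gamma>" "K_model (\<lambda>x. x < \<gamma>) D I"
  shows "\<forall>\<sigma>\<in>stage \<gamma>. holds D I \<sigma>"
  using W_nf[OF assms(1)] assms
proof (induction \<gamma> arbitrary: D I rule: nf_induct)
  case zero
  then have "D \<noteq> {}" "\<forall>\<sigma>\<in>T\<^sub>\<tau>. holds D I \<sigma>"
    using holds_T_tau_iff by (auto simp: K_model_def)
  then show ?case
    using holds_if_in_fo_closure by (simp add: iter_OZ)
next
  case (succ \<gamma>)
  define \<beta> where "\<beta> = opred \<gamma>"
  have "W \<beta>" "\<beta> < \<gamma>"
    using W_downward[OF succ.prems(1)] nf_opred opred_less succ.hyps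
    by (auto simp: \<beta>_def is_succ_def)
  have sound: "K_model (\<lambda>x. x < \<beta>) D' I' \<Longrightarrow> \<forall>\<sigma>\<in>stage \<beta>. holds D' I' \<sigma>" for D' I'
    using succ.IH \<open>W \<beta>\<close> by (simp add: \<beta>_def)
  have "x < \<gamma>" if "x \<le> \<beta>" for x
    using that \<open>\<beta> < \<gamma>\<close> by (rule le_less_trans)
  then have K_le: "K_model (\<lambda>x. x \<le> \<beta>) D I"
    by (rule K_model_mono[OF succ.prems(2)])
  have "K_model (\<lambda>x. x < \<beta>) D I"
    by (rule K_model_mono[OF K_le]) simp
  then have "\<forall>\<psi>\<in>stage \<beta> \<union> pset L\<^sub>\<tau> [0] p_U (stage \<beta>). holds D I \<psi>"
    using sound K_model_holds_pset[OF \<open>W \<beta>\<close> K_le sound] by blast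
  then show ?case
    using holds_if_in_fo_closure succ.prems(2)
    by (simp add: iter_succ[OF succ.hyps(1,2)] jump_def \<beta>_def K_model_def)
next
  case (limit \<gamma>)
  show ?case
  proof
    fix \<sigma>
    assume "\<sigma> \<in> stage \<gamma>"
    then obtain \<beta> where "nf \<beta>" "\<beta> < \<gamma>" "\<sigma> \<in> stage \<beta>"
      using iter_limit[OF limit.hyps(1,2)] by blast
    moreover have "x < \<gamma>" if "x < \<beta>" for x
      using that \<open>\<beta> < \<gamma>\<close> by (rule less_trans)
    then have "K_model (\<lambda>x. x < \<beta>) D I"
      by (rule K_model_mono[OF limit.prems(2)])
    ultimately show "holds D I \<sigma>"
      using limit.IH W_downward[OF limit.prems(1)] by blast
  qed
qed

lemma entails_P_imp_U:
  assumes "W \<gamma>" "node s"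
    and children: "\<And>i. in_tau f \<alpha> (s @ [i]) \<Longrightarrow> empty_P (s @ [i]) \<in> stage \<gamma>"
  shows "entails (stage \<gamma>) (All 0 (Imp (Atom (P s) 0) (Atom (U i) 0)))"
  unfolding entails_def
proof (intro allI impI)
  fix D I
  assume "D \<noteq> {}" and model: "\<forall>\<psi>\<in>stage \<gamma>. holds D I \<psi>"
  then have T: "T_model \<tau> D I"
    using T_tau_subset_stage[OF W_nf[OF assms(1)]] holds_T_tau_iff by blast
  have "D \<inter> I (P s) \<subseteq> I (U i)"
  proof (cases "in_tau f \<alpha> (s @ [i])")
    case True
    then have "D \<inter> I (P (s @ [i])) = {}"
      using children model holds_empty_P_iff[OF \<open>D \<noteq> {}\<close>] by blast
    then show ?thesis
      using T True assms(2) by (simp add: T_model_tau_iff)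
  next
    case False
    then have "lab s = OZ"
      using assms(2) by (simp add: in_tau_snoc_iff)
    then show ?thesis
      using T assms(2) by (simp add: T_model_tau_iff)
  qed
  then show "holds D I (All 0 (Imp (Atom (P s) 0) (Atom (U i) 0)))"
    using \<open>D \<noteq> {}\<close> by (auto simp: holds_def)
qed

lemma empty_P_in_stage:
  assumes "W \<beta>" "node s" "lab s < \<beta>"
  shows "empty_P s \<in> stage \<beta>"
  using W_nf[OF assms(1)] assms
proof (induction \<beta> arbitrary: s rule: nf_induct)
  case zero
  then show ?case by simp
next
  case (succ \<beta>)
  define \<beta>' where "\<beta>' = opred \<beta>"
  have "W \<beta>'" "lab s \<le> \<beta>'"
    using W_downward[OF succ.prems(1)] nf_opred opred_less less_succ_imp_le_opred succ.hyps succ.prems(3)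
    by (auto simp: \<beta>'_def is_succ_def)
  have "empty_P (s @ [i]) \<in> stage \<beta>'" if "in_tau f \<alpha> (s @ [i])" for i
  proof -
    have "lab (s @ [i]) < \<beta>'"
      using node_ord_snoc_less[OF W_\<alpha> that] \<open>lab s \<le> \<beta>'\<close> by (rule less_le_trans)
    then show ?thesis
      using succ.IH \<open>W \<beta>'\<close> that by (simp add: \<beta>'_def)
  qed
  then have "entails (stage \<beta>') (All 0 (Imp (Atom (P s) 0) (Atom (U i) 0)))" for i
    using entails_P_imp_U[OF \<open>W \<beta>'\<close> succ.prems(2)] by blast
  then have "empty_P s \<in> pset L\<^sub>\<tau> [0] p_U (stage \<beta>')"
    using succ.prems(2) by (auto simp: pset_def p_U_def empty_P_def alls_def in_lang_def P_in_lang_iff)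
  moreover have "sentence L\<^sub>\<tau> (empty_P s)"
    using succ.prems(2) by (simp add: sentence_def in_lang_def empty_P_def exs_def P_in_lang_iff)
  ultimately show ?case
    unfolding iter_succ[OF succ.hyps(1,2)] jump_def fo_closure_def \<beta>'_def[symmetric] entails_def
    by blast
next
  case (limit \<beta>)
  obtain i where "lab s \<le> f \<beta> i"
    using fs_cofinal[OF limit.prems(1) limit.hyps(2)] W_nf[OF W_lab] limit.prems(2,3) by blast
  then have "lab s < f \<beta> (Suc i)"
    using fs_less_Suc[OF limit.prems(1) limit.hyps(2)] by (rule le_less_trans)
  moreover have "nf (f \<beta> (Suc i))" "f \<beta> (Suc i) < \<beta>"
    using fs_nf fs_less limit.prems(1) limit.hyps(2) by blast+
  ultimately have "empty_P s \<in> stage (f \<beta> (Suc i))"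
    using limit.IH W_downward[OF limit.prems(1)] limit.prems(2) by blast
  then show ?case
    using iter_limit[OF limit.hyps(1,2)] \<open>nf (f \<beta> (Suc i))\<close> \<open>f \<beta> (Suc i) < \<beta>\<close> by blast
qed

lemma K_model_if_holds_stage:
  assumes "W \<gamma>" "D \<noteq> {}" "\<forall>\<sigma>\<in>stage \<gamma>. holds D I \<sigma>"
  shows "K_model (\<lambda>x. x < \<gamma>) D I"
proof -
  have "T_model \<tau> D I"
    using assms T_tau_subset_stage[OF W_nf] holds_T_tau_iff by blast
  moreover have "D \<inter> I (P s) = {}" if "node s" "lab s < \<gamma>" for s
    using empty_P_in_stage[OF assms(1) that] assms(3) holds_empty_P_iff[OF assms(2)] by blast
  ultimately show ?thesis
    using assms(2) by (simp add: K_model_def)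
qed

lemma in_stage_if_valid:
  assumes "W \<gamma>" "\<not> is_limit \<gamma>" "sentence L\<^sub>\<tau> \<sigma>" "\<forall>s. P s \<in> preds \<sigma> \<longrightarrow> lab s < \<gamma>"
    and valid: "\<And>D I. K_model (\<lambda>_. True) D I \<Longrightarrow> holds D I \<sigma>"
  shows "\<sigma> \<in> stage \<gamma>"
proof -
  obtain X where X: "stage \<gamma> = fo_closure L\<^sub>\<tau> X"
    using assms(2) iter_OZ iter_succ[OF W_nf[OF assms(1)]] unfolding jump_def
    by (metis is_limit_def is_succ_def)
  have "holds D I \<sigma>" if "D \<noteq> {}" "\<forall>\<psi>\<in>X. holds D I \<psi>" for D I
  proof -
    have "K_model (\<lambda>x. x < \<gamma>) D I"
      using K_model_if_holds_stage[OF assms(1) that(1)] holds_if_in_fo_closure that X by blast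
    define I\<^sub>0 where "I\<^sub>0 R = (case R of P _ \<Rightarrow> {} | U j \<Rightarrow> I (U j))" for R
    have "K_model (\<lambda>_. True) D I\<^sub>0"
      using \<open>K_model (\<lambda>x. x < \<gamma>) D I\<close> T_model_clear_P unfolding K_model_def I\<^sub>0_def by auto
    moreover have "\<forall>R\<in>preds \<sigma>. I R \<inter> D = I\<^sub>0 R \<inter> D"
    proof
      fix R
      assume "R \<in> preds \<sigma>"
      show "I R \<inter> D = I\<^sub>0 R \<inter> D"
      proof (cases R)
        case (P s)
        then have "node s" "lab s < \<gamma>"
          using \<open>R \<in> preds \<sigma>\<close> assms(3,4) P_in_lang_iff by (auto simp: sentence_def in_lang_def)
        then show ?thesis
          using \<open>K_model (\<lambda>x. x < \<gamma>) D I\<close> P by (auto simp: K_model_def I\<^sub>0_def)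
      qed (simp add: I\<^sub>0_def)
    qed
    ultimately show ?thesis
      using valid holds_preds_cong[of \<sigma> I D I\<^sub>0] by simp
  qed
  then show ?thesis
    using assms(3) X by (simp add: fo_closure_def entails_def)
qed

lemma stage_jump_closed: "jump L\<^sub>\<tau> [0] p_U (stage \<alpha>) \<subseteq> stage \<alpha>"
proof
  fix \<sigma>
  assume "\<sigma> \<in> jump L\<^sub>\<tau> [0] p_U (stage \<alpha>)"
  then have "sentence L\<^sub>\<tau> \<sigma>" and entailed: "entails (stage \<alpha> \<union> pset L\<^sub>\<tau> [0] p_U (stage \<alpha>)) \<sigma>"
    by (simp_all add: jump_def fo_closure_def)
  have valid: "holds D I \<sigma>" if "K_model (\<lambda>_. True) D I" for D I
  proof -
    have K_le: "K_model (\<lambda>x. x \<le> \<alpha>) D I" and K_less: "K_model (\<lambda>x. x < \<alpha>) D I"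
      using that by (auto intro: K_model_mono)
    have "\<forall>\<psi>\<in>stage \<alpha> \<union> pset L\<^sub>\<tau> [0] p_U (stage \<alpha>). holds D I \<psi>"
      using K_model_holds_stage[OF W_\<alpha> K_less]
        K_model_holds_pset[OF W_\<alpha> K_le K_model_holds_stage[OF W_\<alpha>]] by blast
    then show ?thesis
      using entailed that by (simp add: entails_def K_model_def)
  qed
  define N where "N = P -` preds \<sigma>"
  have "finite N"
    unfolding N_def using finite_preds by (rule finite_vimageI) (simp add: inj_def)
  have "node s" if "s \<in> N" for s
    using that \<open>sentence L\<^sub>\<tau> \<sigma>\<close> P_in_lang_iff by (auto simp: N_def sentence_def in_lang_def)
  then obtain \<gamma> where \<gamma>: "nf \<gamma>" "\<not> is_limit \<gamma>" "\<gamma> \<le> \<alpha>" "\<forall>x\<in>lab ` N. x < \<gamma>"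
    using finite_set_has_nonlimit_bound[OF W_nf[OF W_\<alpha>], of "lab ` N"] \<open>finite N\<close>
      W_nf[OF W_lab] lab_less by blast
  have "W \<gamma>"
    using \<gamma>(1,3) W_downward[OF W_\<alpha>] W_\<alpha> by (cases "\<gamma> = \<alpha>") auto
  then have "\<sigma> \<in> stage \<gamma>"
    using in_stage_if_valid \<gamma>(2,4) \<open>sentence L\<^sub>\<tau> \<sigma>\<close> valid by (simp add: N_def)
  then show "\<sigma> \<in> stage \<alpha>"
    using iter_mono[OF W_nf[OF W_\<alpha>] \<gamma>(1,3)] by blast
qed

lemma stage_neq_if_less:
  assumes "nf \<beta>" "\<beta> < \<alpha>"
  shows "stage \<beta> \<noteq> stage \<alpha>"
proof
  assume same: "stage \<beta> = stage \<alpha>"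
  have "\<alpha> \<noteq> OZ"
    using assms(2) by auto
  obtain i where "\<beta> \<le> child_ord f \<alpha> i"
    using eventually_happens'[OF sequentially_bot eventually_le_child_ord[OF W_\<alpha> assms]] by blast
  then have "\<beta> \<le> lab [i]" "node [i]"
    using \<open>\<alpha> \<noteq> OZ\<close> by (simp_all add: in_tau_singleton_iff)
  then have "empty_P [i] \<in> stage \<beta>"
    using empty_P_in_stage[OF W_\<alpha>] lab_less same by blast
  define I :: "psym \<Rightarrow> nat set" where
    "I R = (case R of P t \<Rightarrow> if t = [i] then {0} else {} | U j \<Rightarrow> UNIV)" for R
  have "U_count_ge UNIV I k" for k
    unfolding U_count_ge_def I_def by (intro exI[of _ "{..<k}"]) auto
  then have "K_model (\<lambda>x. x < \<beta>) UNIV I"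
    using \<open>\<beta> \<le> lab [i]\<close> by (auto simp: K_model_def T_model_tau_iff I_def)
  then have "holds UNIV I (empty_P [i])"
    using K_model_holds_stage[OF W_downward[OF W_\<alpha> assms]] \<open>empty_P [i] \<in> stage \<beta>\<close> by blast
  then show False
    by (simp add: holds_empty_P_iff I_def)
qed

theorem rk_tau: "rk_tau_is f \<alpha>"
  unfolding rk_tau_is_def
  using W_nf[OF W_\<alpha>] stage_jump_closed stage_neq_if_less by (rule rank_isI)

end

section \<open>The two systems of fundamental sequences\<close>

lemma fundamental_sequences_below_omega2:
  assumes "valid_fs_below_omega2 f"
  shows "fundamental_sequences (\<lambda>x. nf x \<and> x < omega2) f"
  using assms unfolding valid_fs_below_omega2_def
  by unfold_locales (auto intro: less_trans)

lemma fundamental_sequences_fs_cnf: "fundamental_sequences nf fs_cnf"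
proof
  fix l i
  assume "nf l" "is_limit l"
  then obtain a b where "l = OP a b"
    by (cases l) (auto simp: is_limit_def)
  then show "nf (fs_cnf l i)"
    using nf_OP_fs_cnf[OF \<open>nf l\<close> \<open>is_limit l\<close>] nf_OP_D by blast
qed (use fs_cnf_less fs_cnf_less_Suc fs_cnf_cofinal in auto)

theorem mainTheorem18:
  shows "(\<forall>f. valid_fs_below_omega2 f \<longrightarrow>
            (\<forall>\<alpha>. nf \<alpha> \<and> ord_lt \<alpha> omega2 \<longrightarrow> rk_tau_is f \<alpha>))
       \<and> (\<forall>\<alpha>. nf \<alpha> \<longrightarrow> rk_tau_is fs_cnf \<alpha>)"
proof (intro conjI allI impI)
  fix f \<alpha>
  assume "valid_fs_below_omega2 f" "nf \<alpha> \<and> ord_lt \<alpha> omega2"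
  then interpret tau_rank "\<lambda>x. nf x \<and> x < omega2" f \<alpha>
    by (simp add: tau_rank_def tau_rank_axioms_def fundamental_sequences_below_omega2)
  show "rk_tau_is f \<alpha>"
    by (rule rk_tau)
next
  fix \<alpha>
  assume "nf \<alpha>"
  then interpret tau_rank nf fs_cnf \<alpha>
    by (simp add: tau_rank_def tau_rank_axioms_def fundamental_sequences_fs_cnf)
  show "rk_tau_is fs_cnf \<alpha>"
    by (rule rk_tau)
qed

end
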